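(* Let $F:\mathbb{R}^n\to\mathbb{R}^n$ be locally Lipschitz, $X^*=\{x:F(x)=0\}$, $\mathcal{M}$ a smooth embedded submanifold of $\mathbb{R}^n$, and $\tilde X^*=X^*\cap\mathcal{M}$. Let $q\in(1,2]$, $L_3>0$, and consider the projected semismooth Newton iteration started at $x_0\in\mathcal{M}$: $$(J_kP_k+\mu_kI)d_k=-F(x_k)+r_k,\qquad x_{k+1}=P_{\mathcal{M}}(x_k+d_k),$$ where $J_k\in\partial_BF(x_k)$, $P_k=P(x_k)$, $\mu_k=\|F(x_k)\|$, and $\|r_k\|/\mu_k\le L_3\|F(x_k)\|^q$. Let $x^*$ be a point of $\tilde X^*$ nearest to $x_0$, and suppose that (A1), (A2), (A3) below hold at $x^*$. If $x_0$ is chosen sufficiently close to $\tilde X^*$, then $\{x_k\}$ converges superlinearly to some solution $\hat x\in\tilde X^*$ of $F(x)=0$.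
   Context: $\partial_BF(x)=\{\lim_kJ(x^k):x^k\to x, F \text{ differentiable at } x^k\}$ (B-Jacobian). $P(x)$ is the matrix of the orthogonal projection onto the tangent space $T_x\mathcal{M}$; $P_{\mathcal{M}}$ is the metric projection onto $\mathcal{M}$. (A1) at $x^*$: there are $b_1>0$, $L_2>0$ such that $F$ is $L_2$-Lipschitz on $\bar B(x^*,b_1)$, and a constant $L_1>0$ such that $\|F(y)-F(x)-J(x)(y-x)\|\le L_1\|y-x\|^2$ for all $x,y\in\mathcal{M}\cap\bar B(x^*,b_1)$ and every $J(x)\in\partial_BF(x)$. (A2) at $x^*$: there is $b_2>0$ such that for all $x\in\mathcal{M}\cap\bar B(x^*,b_2)$ and all $J(x)\in\partial_BF(x)$, $\|(J(x)P(x)+\mu(x)I)^{-1}\|\le\mu(x)^{-1}$, where $\mu(x)=\|F(x)\|$. (A3) at $x^*$: there are $b_3>0$, $\gamma>0$ with $\|F(x)\|\ge\gamma\,\mathrm{dist}(x,\tilde X^* )$ for all $x\in\mathcal{M}\cap\bar B(x^*,b_3)$. Superlinear convergence here means $\|x_{k+1}-\hat x\|=o(\|x_k-\hat x\|)$. *)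

theory Defs
  imports "HOL-Analysis.Analysis" "HOL-Library.Landau_Symbols"
begin

fun Ck_on :: "nat \<Rightarrow> 'a::euclidean_space set \<Rightarrow> ('a \<Rightarrow> 'b::euclidean_space) \<Rightarrow> bool" where
  "Ck_on 0 U f = continuous_on U f"
| "Ck_on (Suc k) U f = (f differentiable_on U \<and>
      (\<forall>v. Ck_on k U (\<lambda>x. frechet_derivative f (at x) v)))"

definition smooth_on :: "'a::euclidean_space set \<Rightarrow> ('a \<Rightarrow> 'b::euclidean_space) \<Rightarrow> bool" where
  "smooth_on U f \<longleftrightarrow> (\<forall>k. Ck_on k U f)"

definition smooth_embedded_submanifold :: "(real^'n) set \<Rightarrow> bool" where
  "smooth_embedded_submanifold M \<longleftrightarrow>
     (\<forall>p\<in>M. \<exists>U V (\<phi>::real^'n \<Rightarrow> real^'n) \<psi> S.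
        open U \<and> p \<in> U \<and> open V \<and> subspace S \<and>
        smooth_on U \<phi> \<and> smooth_on V \<psi> \<and> \<phi> ` U = V \<and>
        (\<forall>x\<in>U. \<psi> (\<phi> x) = x) \<and> (\<forall>y\<in>V. \<phi> (\<psi> y) = y) \<and>
        \<phi> ` (M \<inter> U) = V \<inter> S)"

definition tangent_space :: "(real^'n) set \<Rightarrow> real^'n \<Rightarrow> (real^'n) set" where
  "tangent_space M x = {v. \<exists>\<gamma> e. e > 0 \<and> (\<forall>t\<in>ball 0 e. \<gamma> t \<in> M) \<and> \<gamma> 0 = x \<and>
        (\<gamma> has_vector_derivative v) (at 0)}"

definition tangent_proj :: "(real^'n) set \<Rightarrow> real^'n \<Rightarrow> real^'n^'n" where
  "tangent_proj M x = matrix (\<lambda>v. THE p. p \<in> tangent_space M x \<and>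
        (\<forall>w\<in>tangent_space M x. (v - p) \<bullet> w = 0))"

definition B_jac :: "(real^'n \<Rightarrow> real^'n) \<Rightarrow> real^'n \<Rightarrow> (real^'n^'n) set" where
  "B_jac F x = {J. \<exists>xs. xs \<longlonglongrightarrow> x \<and> (\<forall>k. F differentiable (at (xs k))) \<and>
        (\<lambda>k. matrix (frechet_derivative F (at (xs k)))) \<longlonglongrightarrow> J}"

definition locally_lipschitz :: "(real^'n \<Rightarrow> real^'m) \<Rightarrow> bool" where
  "locally_lipschitz F \<longleftrightarrow> (\<forall>x. \<exists>e>0. \<exists>L. L-lipschitz_on (cball x e) F)"

definition mnorm :: "real^'n^'m \<Rightarrow> real" where
  "mnorm A = onorm (\<lambda>v. A *v v)"

definition A1 :: "(real^'n \<Rightarrow> real^'n) \<Rightarrow> (real^'n) set \<Rightarrow> real^'n \<Rightarrow> bool" where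
  "A1 F M xs \<longleftrightarrow> (\<exists>b1>0. \<exists>L2>0. L2-lipschitz_on (cball xs b1) F \<and>
     (\<exists>L1>0. \<forall>x\<in>M \<inter> cball xs b1. \<forall>y\<in>M \<inter> cball xs b1. \<forall>J\<in>B_jac F x.
        norm (F y - F x - J *v (y - x)) \<le> L1 * (norm (y - x))\<^sup>2))"

definition A2 :: "(real^'n \<Rightarrow> real^'n) \<Rightarrow> (real^'n) set \<Rightarrow> real^'n \<Rightarrow> bool" where
  "A2 F M xs \<longleftrightarrow> (\<exists>b2>0. \<forall>x\<in>M \<inter> cball xs b2. \<forall>J\<in>B_jac F x. F x \<noteq> 0 \<longrightarrow>
     invertible (J ** tangent_proj M x + norm (F x) *\<^sub>R mat 1) \<and>
     mnorm (matrix_inv (J ** tangent_proj M x + norm (F x) *\<^sub>R mat 1)) \<le> 1 / norm (F x))"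

definition A3 :: "(real^'n \<Rightarrow> real^'n) \<Rightarrow> (real^'n) set \<Rightarrow> real^'n \<Rightarrow> bool" where
  "A3 F M xs \<longleftrightarrow> (\<exists>b3>0. \<exists>\<gamma>>0. \<forall>x\<in>M \<inter> cball xs b3.
     norm (F x) \<ge> \<gamma> * infdist x ({z. F z = 0} \<inter> M))"

end

theory Submission
  imports Defs
begin

text \<open>
  A slice chart shows that \<open>M\<close> is curved at most quadratically near \<open>xs\<close>: the tangent projection
  \<open>P(x)\<close> reproduces a chord \<open>y - x\<close> up to \<open>O(|y - x|\<^sup>2)\<close>, and it annihilates a normal vector
  \<open>w - z\<close> (\<open>z\<close> a nearest point of \<open>M\<close> to \<open>w\<close>) up to \<open>O(|x - z| |w - z|)\<close>.
  Let \<open>\<delta>\<close> be the distance of an iterate \<open>x\<close> to the solution set. Comparing the direction \<open>d\<close>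
  with the displacement to a nearby solution, (A1) and (A2) give \<open>|d| = O(\<delta>)\<close>; expanding \<open>F\<close> at
  the projected point with (A1) and the curvature bounds gives \<open>|F(x')| = O(\<delta>\<^sup>2)\<close>, and the error
  bound (A3) turns this into \<open>dist(x', solutions) = O(\<delta>\<^sup>2)\<close>. So the distances contract
  quadratically, the steps are summable, and the iterates converge to a point \<open>xh\<close>, which is a
  solution because \<open>F\<close> is continuous and \<open>M\<close> is locally closed. Finally
  \<open>|x(k+1) - xh| = O(dist(x(k+1), solutions)) = O(dist(x(k), solutions) |x(k) - xh|)\<close>
  with \<open>dist(x(k), solutions) \<longrightarrow> 0\<close>, which is superlinear convergence.
\<close>

section \<open>Orthogonal projection onto a subspace\<close>

definition orthogonal_proj :: "(real^'n) set \<Rightarrow> real^'n \<Rightarrow> real^'n" where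
  "orthogonal_proj T v = (THE p. p \<in> T \<and> (\<forall>w\<in>T. (v - p) \<bullet> w = 0))"

lemma orthogonal_proj_eqI:
  assumes T: "subspace T" and p: "p \<in> T" "\<forall>w\<in>T. (v - p) \<bullet> w = 0"
  shows "orthogonal_proj T v = p"
  unfolding orthogonal_proj_def
proof (rule the_equality)
  fix p' assume p': "p' \<in> T \<and> (\<forall>w\<in>T. (v - p') \<bullet> w = 0)"
  then have "p' - p \<in> T" using p T by (simp add: subspace_diff)
  then have "(v - p) \<bullet> (p' - p) = 0" "(v - p') \<bullet> (p' - p) = 0" using p p' by auto
  then have "(p' - p) \<bullet> (p' - p) = 0" by (simp add: inner_diff_left inner_diff_right)
  then show "p' = p" by simp
qed (use p in auto)

lemma orthogonal_proj:
  assumes T: "subspace T"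
  shows "orthogonal_proj T v \<in> T \<and> (\<forall>w\<in>T. (v - orthogonal_proj T v) \<bullet> w = 0)"
proof -
  obtain y z where y: "y \<in> span T" and z: "\<And>w. w \<in> span T \<Longrightarrow> orthogonal z w" and v: "v = y + z"
    using orthogonal_subspace_decomp_exists by blast
  have yT: "y \<in> T" using y T by (metis span_eq_iff)
  have orth: "\<forall>w\<in>T. (v - y) \<bullet> w = 0" using z v by (auto simp: orthogonal_def span_base)
  have "orthogonal_proj T v = y" by (rule orthogonal_proj_eqI[OF T yT orth])
  then show ?thesis using yT orth by auto
qed

lemma linear_orthogonal_proj:
  assumes T: "subspace T"
  shows "linear (orthogonal_proj T)"
proof (rule linearI)
  fix a b
  show "orthogonal_proj T (a + b) = orthogonal_proj T a + orthogonal_proj T b"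
    using orthogonal_proj[OF T, of a] orthogonal_proj[OF T, of b] T
    by (intro orthogonal_proj_eqI) (auto simp: subspace_add inner_diff_left inner_add_left)
next
  fix c :: real and a
  show "orthogonal_proj T (c *\<^sub>R a) = c *\<^sub>R orthogonal_proj T a"
    using orthogonal_proj[OF T, of a] T
    by (intro orthogonal_proj_eqI)
       (auto simp: subspace_scale algebra_simps inner_diff_left simp flip: scaleR_diff_right)
qed

lemma orthogonal_proj_best_approx:
  assumes T: "subspace T" and t: "t \<in> T"
  shows "norm (v - orthogonal_proj T v) \<le> norm (v - t)"
proof -
  have "orthogonal_proj T v - t \<in> T" using orthogonal_proj[OF T] t T by (simp add: subspace_diff)
  then have "(v - orthogonal_proj T v) \<bullet> (orthogonal_proj T v - t) = 0" using orthogonal_proj[OF T] by blast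
  then have "norm (v - t) ^ 2 = norm (v - orthogonal_proj T v) ^ 2 + norm (orthogonal_proj T v - t) ^ 2"
    using norm_add_Pythagorean[of "v - orthogonal_proj T v" "orthogonal_proj T v - t"]
    by (simp add: orthogonal_def)
  then have "norm (v - orthogonal_proj T v) ^ 2 \<le> norm (v - t) ^ 2" by simp
  then show ?thesis by (simp add: power2_le_iff_abs_le)
qed

lemma norm_orthogonal_proj_sq:
  assumes T: "subspace T"
  shows "(norm (orthogonal_proj T u))\<^sup>2 = orthogonal_proj T u \<bullet> u"
proof -
  have "(u - orthogonal_proj T u) \<bullet> orthogonal_proj T u = 0" using orthogonal_proj[OF T] by blast
  then show ?thesis by (simp add: inner_diff_left inner_diff_right inner_commute power2_norm_eq_inner)
qed

lemma tangent_proj_apply: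
  assumes "subspace (tangent_space M x)"
  shows "tangent_proj M x *v v = orthogonal_proj (tangent_space M x) v"
proof -
  have "tangent_proj M x = matrix (orthogonal_proj (tangent_space M x))"
    unfolding tangent_proj_def orthogonal_proj_def ..
  then show ?thesis by (simp add: linear_orthogonal_proj[OF assms])
qed

section \<open>Derivatives, Lipschitz bounds and B-Jacobians\<close>

lemma smooth_on_C2:
  assumes "smooth_on U f"
  shows "f differentiable_on U"
    and "(\<lambda>x. frechet_derivative f (at x) v) differentiable_on U"
    and "continuous_on U (\<lambda>x. frechet_derivative (\<lambda>y. frechet_derivative f (at y) v) (at x) w)"
proof -
  have "Ck_on (Suc (Suc 0)) U f" using assms unfolding smooth_on_def by blast
  then show "f differentiable_on U"
    and "(\<lambda>x. frechet_derivative f (at x) v) differentiable_on U"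
    and "continuous_on U (\<lambda>x. frechet_derivative (\<lambda>y. frechet_derivative f (at y) v) (at x) w)"
    by simp_all
qed

lemma has_derivative_frechet_derivative_on_open:
  assumes "f differentiable_on U" "open U" "x \<in> U"
  shows "(f has_derivative frechet_derivative f (at x)) (at x)"
  using assms differentiable_on_eq_differentiable_at frechet_derivative_works by blast

lemma linear_frechet_derivative_on_open:
  assumes "f differentiable_on U" "open U" "x \<in> U"
  shows "linear (frechet_derivative f (at x))"
  using has_derivative_frechet_derivative_on_open[OF assms] has_derivative_linear by blast

lemma norm_linear_le_sum_axis:
  fixes f :: "real^'n \<Rightarrow> real^'m"
  assumes "linear f"
  shows "norm (f w) \<le> (\<Sum>i\<in>UNIV. norm (f (axis i 1))) * norm w"
proof -
  have "w = (\<Sum>i\<in>UNIV. w $ i *\<^sub>R axis i 1)"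
    using basis_expansion[of w] by (simp add: scalar_mult_eq_scaleR)
  moreover have "f (\<Sum>i\<in>UNIV. w $ i *\<^sub>R axis i 1) = (\<Sum>i\<in>UNIV. w $ i *\<^sub>R f (axis i 1))"
    by (simp add: linear_sum[OF assms] linear_scale[OF assms] o_def)
  ultimately have "norm (f w) \<le> (\<Sum>i\<in>UNIV. norm (w $ i *\<^sub>R f (axis i 1)))"
    using norm_sum[of "\<lambda>i. w $ i *\<^sub>R f (axis i 1)" UNIV] by simp
  also have "\<dots> \<le> (\<Sum>i\<in>UNIV. norm w * norm (f (axis i 1)))"
    by (rule sum_mono) (simp add: component_le_norm_cart mult_right_mono)
  finally show ?thesis by (simp add: sum_distrib_left mult.commute)
qed

lemma frechet_derivative_bounded_on_compact:
  fixes f :: "real^'n \<Rightarrow> real^'m"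
  assumes f: "f differentiable_on U" and U: "open U" and K: "compact K" "K \<subseteq> U"
    and cont: "\<And>v. continuous_on U (\<lambda>x. frechet_derivative f (at x) v)"
  obtains B where "B \<ge> 0" "\<And>x w. x \<in> K \<Longrightarrow> norm (frechet_derivative f (at x) w) \<le> B * norm w"
proof -
  have "bounded ((\<lambda>x. frechet_derivative f (at x) (axis i 1)) ` K)" for i
    using cont K by (meson compact_continuous_image compact_imp_bounded continuous_on_subset)
  then have "\<forall>i. \<exists>B. \<forall>x\<in>K. norm (frechet_derivative f (at x) (axis i 1)) \<le> B"
    by (auto simp: bounded_iff)
  then obtain B where B: "\<And>i x. x \<in> K \<Longrightarrow> norm (frechet_derivative f (at x) (axis i 1)) \<le> B i"
    by metis
  show ?thesis
  proof
    show "(\<Sum>i\<in>UNIV. max 0 (B i)) \<ge> 0" by (simp add: sum_nonneg)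
    fix x w assume x: "x \<in> K"
    have "norm (frechet_derivative f (at x) w)
        \<le> (\<Sum>i\<in>UNIV. norm (frechet_derivative f (at x) (axis i 1))) * norm w"
      using linear_frechet_derivative_on_open[OF f U] x K by (intro norm_linear_le_sum_axis) auto
    also have "\<dots> \<le> (\<Sum>i\<in>UNIV. max 0 (B i)) * norm w"
      using B[OF x] by (intro mult_right_mono sum_mono) (auto intro: max.coboundedI2)
    finally show "norm (frechet_derivative f (at x) w) \<le> (\<Sum>i\<in>UNIV. max 0 (B i)) * norm w" .
  qed
qed

lemma lipschitz_of_frechet_derivative_bound:
  fixes f :: "real^'n \<Rightarrow> real^'m"
  assumes f: "f differentiable_on U" and U: "open U" and C: "convex C" "C \<subseteq> U"
    and B: "\<And>x w. x \<in> C \<Longrightarrow> norm (frechet_derivative f (at x) w) \<le> B * norm w"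
    and x: "x \<in> C" and y: "y \<in> C"
  shows "norm (f x - f y) \<le> B * norm (x - y)"
proof (rule differentiable_bound[OF C(1) _ _ x y])
  fix z assume "z \<in> C"
  then show "(f has_derivative frechet_derivative f (at z)) (at z within C)"
    using has_derivative_frechet_derivative_on_open[OF f U] C has_derivative_at_withinI by blast
  then show "onorm (frechet_derivative f (at z)) \<le> B"
    using B \<open>z \<in> C\<close> by (intro onorm_le) auto
qed

lemma frechet_derivative_left_inverse:
  fixes f :: "real^'n \<Rightarrow> real^'n"
  assumes U: "open U" "x \<in> U" and inv: "\<And>y. y \<in> U \<Longrightarrow> g (f y) = y"
    and df: "(f has_derivative f') (at x)" and dg: "(g has_derivative g') (at (f x))"
  shows "g' (f' v) = v"
proof -
  have "((\<lambda>y. y) has_derivative (g' \<circ> f')) (at x)"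
    by (rule has_derivative_transform_within_open[OF diff_chain_at[OF df dg] U]) (use inv in auto)
  then have "g' \<circ> f' = (\<lambda>y. y)" using has_derivative_ident has_derivative_unique by blast
  then show ?thesis by (metis comp_apply)
qed

lemma frechet_derivative_lipschitz_on_compact:
  fixes f :: "real^'n \<Rightarrow> real^'m"
  assumes f: "smooth_on U f" and U: "open U" and C: "compact C" "convex C" "C \<subseteq> U"
  obtains L where "L \<ge> 0"
    "\<And>a b s. a \<in> C \<Longrightarrow> b \<in> C \<Longrightarrow>
       norm (frechet_derivative f (at a) s - frechet_derivative f (at b) s) \<le> L * norm (a - b) * norm s"
proof -
  let ?Df = "\<lambda>x. frechet_derivative f (at x)"
  have "\<exists>B. \<forall>a\<in>C. \<forall>b\<in>C. norm (?Df a (axis i 1) - ?Df b (axis i 1)) \<le> B * norm (a - b)" for i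
  proof -
    obtain B where "\<And>x w. x \<in> C \<Longrightarrow>
        norm (frechet_derivative (\<lambda>y. ?Df y (axis i 1)) (at x) w) \<le> B * norm w"
      using frechet_derivative_bounded_on_compact[OF smooth_on_C2(2)[OF f] U C(1,3) smooth_on_C2(3)[OF f]]
      by metis
    then show ?thesis
      using lipschitz_of_frechet_derivative_bound[OF smooth_on_C2(2)[OF f] U C(2,3)] by blast
  qed
  then obtain B where B: "\<And>i a b. a \<in> C \<Longrightarrow> b \<in> C \<Longrightarrow>
      norm (?Df a (axis i 1) - ?Df b (axis i 1)) \<le> B i * norm (a - b)"
    by metis
  show ?thesis
  proof
    show "(\<Sum>i\<in>UNIV. max 0 (B i)) \<ge> 0" by (simp add: sum_nonneg)
    fix a b s assume ab: "a \<in> C" "b \<in> C"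
    have "linear (\<lambda>s. ?Df a s - ?Df b s)"
      using ab C linear_frechet_derivative_on_open[OF smooth_on_C2(1)[OF f] U]
      by (intro linear_compose_sub) auto
    then have "norm (?Df a s - ?Df b s) \<le> (\<Sum>i\<in>UNIV. norm (?Df a (axis i 1) - ?Df b (axis i 1))) * norm s"
      by (rule norm_linear_le_sum_axis)
    also have "\<dots> \<le> ((\<Sum>i\<in>UNIV. max 0 (B i)) * norm (a - b)) * norm s"
    proof (unfold sum_distrib_right, intro mult_right_mono sum_mono)
      fix i
      show "norm (?Df a (axis i 1) - ?Df b (axis i 1)) \<le> max 0 (B i) * norm (a - b)"
        using B[OF ab, of i] by (meson max.cobounded2 mult_right_mono norm_ge_zero order_trans)
    qed simp
    finally show "norm (?Df a s - ?Df b s) \<le> (\<Sum>i\<in>UNIV. max 0 (B i)) * norm (a - b) * norm s" .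
  qed
qed

lemma taylor_remainder_le_of_lipschitz_derivative:
  fixes f :: "real^'n \<Rightarrow> real^'m"
  assumes f: "f differentiable_on U" and U: "open U" and C: "convex C" "C \<subseteq> U"
    and L: "L \<ge> 0"
    and lip: "\<And>a b s. a \<in> C \<Longrightarrow> b \<in> C \<Longrightarrow>
       norm (frechet_derivative f (at a) s - frechet_derivative f (at b) s) \<le> L * norm (a - b) * norm s"
    and ab: "a \<in> C" "b \<in> C"
  shows "norm (f b - f a - frechet_derivative f (at a) (b - a)) \<le> L * (norm (b - a))\<^sup>2"
proof -
  let ?Df = "\<lambda>x. frechet_derivative f (at x)"
  have seg: "closed_segment a b \<subseteq> C" using ab C(1) by (rule closed_segment_subset)
  have lin: "linear (?Df a)" using linear_frechet_derivative_on_open[OF f U] ab C by blast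
  have "norm ((f b - ?Df a b) - (f a - ?Df a a)) \<le> (L * norm (b - a)) * norm (b - a)"
  proof (rule differentiable_bound[OF convex_closed_segment, where f' = "\<lambda>y h. ?Df y h - ?Df a h"])
    fix y assume y: "y \<in> closed_segment a b"
    then have "(f has_derivative ?Df y) (at y)"
      using has_derivative_frechet_derivative_on_open[OF f U] seg C by blast
    then have "((\<lambda>y. f y - ?Df a y) has_derivative (\<lambda>h. ?Df y h - ?Df a h)) (at y)"
      using lin by (intro has_derivative_diff linear_imp_has_derivative)
    then show "((\<lambda>y. f y - ?Df a y) has_derivative (\<lambda>h. ?Df y h - ?Df a h)) (at y within closed_segment a b)"
      by (rule has_derivative_at_withinI)
    have "norm (y - a) \<le> norm (b - a)"
      using dist_in_closed_segment[OF y] by (simp add: dist_norm norm_minus_commute)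
    then have "norm (?Df y h - ?Df a h) \<le> L * norm (b - a) * norm h" for h
    proof -
      have "norm (?Df y h - ?Df a h) \<le> L * norm (y - a) * norm h" using lip[of y a h] y seg ab by auto
      also have "\<dots> \<le> L * norm (b - a) * norm h"
        using \<open>norm (y - a) \<le> norm (b - a)\<close> L by (intro mult_right_mono mult_left_mono) auto
      finally show ?thesis .
    qed
    then show "onorm (\<lambda>h. ?Df y h - ?Df a h) \<le> L * norm (b - a)"
      by (intro onorm_le)
  qed auto
  moreover have "(f b - ?Df a b) - (f a - ?Df a a) = f b - f a - ?Df a (b - a)"
    using linear_diff[OF lin] by simp
  ultimately show ?thesis by (simp add: power2_eq_square mult.assoc)
qed

lemma norm_derivative_le_lipschitz:
  fixes f :: "real^'n \<Rightarrow> real^'m"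
  assumes D: "(f has_derivative D) (at y)" and G: "open G" "y \<in> G"
    and lip: "\<And>a b. a \<in> G \<Longrightarrow> b \<in> G \<Longrightarrow> norm (f a - f b) \<le> L * norm (a - b)"
  shows "norm (D v) \<le> L * norm v"
proof (cases "v = 0")
  case True
  then show ?thesis using has_derivative_linear[OF D] by (simp add: linear_0)
next
  case False
  show ?thesis
  proof (rule field_le_epsilon)
    fix \<epsilon> :: real assume \<epsilon>: "\<epsilon> > 0"
    have "\<epsilon> / norm v > 0" using \<epsilon> False by simp
    then obtain r where r: "r > 0"
      "\<And>z. norm (z - y) < r \<Longrightarrow> norm (f z - f y - D (z - y)) \<le> (\<epsilon> / norm v) * norm (z - y)"
      using D unfolding has_derivative_at_alt by blast
    obtain e where e: "e > 0" "ball y e \<subseteq> G" using G openE by blast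
    define t where "t = min r e / (2 * norm v)"
    have t: "t > 0" using r e False by (simp add: t_def)
    have tv: "norm (t *\<^sub>R v) = min r e / 2" using False r(1) e(1) by (simp add: t_def)
    have "y + t *\<^sub>R v \<in> G" using tv e by (auto simp: dist_norm)
    then have "norm (f (y + t *\<^sub>R v) - f y) \<le> L * norm (t *\<^sub>R v)"
      using lip[of "y + t *\<^sub>R v" y] G(2) by simp
    moreover have "norm (f (y + t *\<^sub>R v) - f y - D (t *\<^sub>R v)) \<le> (\<epsilon> / norm v) * norm (t *\<^sub>R v)"
      using r(2)[of "y + t *\<^sub>R v"] tv r(1) e(1) by simp
    ultimately have "norm (D (t *\<^sub>R v)) \<le> L * norm (t *\<^sub>R v) + (\<epsilon> / norm v) * norm (t *\<^sub>R v)"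
      using norm_triangle_ineq4[of "f (y + t *\<^sub>R v) - f y" "f (y + t *\<^sub>R v) - f y - D (t *\<^sub>R v)"]
      by simp
    also have "\<dots> = t * (L * norm v + \<epsilon>)" using t False by (simp add: field_simps)
    also have "norm (D (t *\<^sub>R v)) = t * norm (D v)"
      using t linear_scale[OF has_derivative_linear[OF D]] by simp
    finally show "norm (D v) \<le> L * norm v + \<epsilon>" using t by simp
  qed
qed

lemma B_jac_norm_le:
  fixes F :: "real^'n \<Rightarrow> real^'n"
  assumes J: "J \<in> B_jac F x" and G: "open G" "x \<in> G"
    and lip: "\<And>a b. a \<in> G \<Longrightarrow> b \<in> G \<Longrightarrow> norm (F a - F b) \<le> L * norm (a - b)"
  shows "norm (J *v v) \<le> L * norm v"
proof -
  obtain xs where xs: "xs \<longlonglongrightarrow> x" and dif: "\<And>k. F differentiable (at (xs k))"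
    and lim: "(\<lambda>k. matrix (frechet_derivative F (at (xs k)))) \<longlonglongrightarrow> J"
    using J unfolding B_jac_def by blast
  have "linear (\<lambda>A::real^'n^'n. A *v v)"
    by (rule linearI) (simp_all add: matrix_vector_mult_add_rdistrib scaleR_matrix_vector_assoc)
  then have "bounded_linear (\<lambda>A::real^'n^'n. A *v v)"
    by (simp add: linear_conv_bounded_linear)
  then have lim_v: "(\<lambda>k. matrix (frechet_derivative F (at (xs k))) *v v) \<longlonglongrightarrow> J *v v"
    using lim by (rule bounded_linear.tendsto)
  have "eventually (\<lambda>k. xs k \<in> G) sequentially" using xs G by (rule topological_tendstoD)
  then have "eventually (\<lambda>k. norm (matrix (frechet_derivative F (at (xs k))) *v v) \<le> L * norm v) sequentially"
  proof eventually_elim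
    case (elim k)
    have D: "(F has_derivative frechet_derivative F (at (xs k))) (at (xs k))"
      using dif frechet_derivative_works by blast
    then show ?case
      using norm_derivative_le_lipschitz[OF D G(1) elim lip] by (simp add: has_derivative_linear)
  qed
  with lim_v show ?thesis by (rule Lim_norm_ubound[OF trivial_limit_sequentially])
qed

section \<open>Local geometry of a smooth embedded submanifold\<close>

lemma nearest_point_orthogonal_tangent:
  fixes M :: "(real^'n) set"
  assumes z: "z \<in> M" and nearest: "\<And>m. m \<in> M \<Longrightarrow> norm (w - z) \<le> norm (w - m)"
    and v: "v \<in> tangent_space M z"
  shows "(w - z) \<bullet> v = 0"
proof -
  obtain \<gamma> e where e: "e > 0" and \<gamma>M: "\<And>t. t \<in> ball 0 e \<Longrightarrow> \<gamma> t \<in> M" and \<gamma>0: "\<gamma> 0 = z"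
    and d\<gamma>: "(\<gamma> has_vector_derivative v) (at 0)"
    using v unfolding tangent_space_def by blast
  have "((\<lambda>x. w - \<gamma> x) has_derivative (\<lambda>h. - (h *\<^sub>R v))) (at 0)"
    using has_derivative_diff[OF has_derivative_const d\<gamma>[unfolded has_vector_derivative_def]] by simp
  from has_derivative_inner[OF this this]
  have D: "((\<lambda>t. (w - \<gamma> t) \<bullet> (w - \<gamma> t)) has_field_derivative (- 2 * ((w - z) \<bullet> v))) (at 0)"
    unfolding has_field_derivative_def
    by (rule has_derivative_eq_rhs) (auto simp: \<gamma>0 inner_commute inner_minus_left inner_minus_right)
  have "\<forall>t. \<bar>0 - t\<bar> < e \<longrightarrow> (w - \<gamma> 0) \<bullet> (w - \<gamma> 0) \<le> (w - \<gamma> t) \<bullet> (w - \<gamma> t)"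
  proof (intro allI impI)
    fix t :: real assume "\<bar>0 - t\<bar> < e"
    then have "norm (w - z) \<le> norm (w - \<gamma> t)" using \<gamma>M nearest by (simp add: dist_real_def)
    then show "(w - \<gamma> 0) \<bullet> (w - \<gamma> 0) \<le> (w - \<gamma> t) \<bullet> (w - \<gamma> t)"
      by (simp add: \<gamma>0 power_mono flip: power2_norm_eq_inner)
  qed
  with D e have "- 2 * ((w - z) \<bullet> v) = 0" by (rule DERIV_local_min)
  then show ?thesis by simp
qed

locale slice_chart =
  fixes M U V S :: "(real^'n) set" and \<phi> \<psi> :: "real^'n \<Rightarrow> real^'n"
  assumes open_U: "open U" and open_V: "open V" and subspace_S: "subspace S"
    and smooth_\<phi>: "smooth_on U \<phi>" and smooth_\<psi>: "smooth_on V \<psi>"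
    and image_U: "\<phi> ` U = V"
    and left_inverse: "\<And>x. x \<in> U \<Longrightarrow> \<psi> (\<phi> x) = x"
    and right_inverse: "\<And>y. y \<in> V \<Longrightarrow> \<phi> (\<psi> y) = y"
    and slice: "\<phi> ` (M \<inter> U) = V \<inter> S"
begin

abbreviation D\<phi> :: "real^'n \<Rightarrow> real^'n \<Rightarrow> real^'n" where "D\<phi> x \<equiv> frechet_derivative \<phi> (at x)"
abbreviation D\<psi> :: "real^'n \<Rightarrow> real^'n \<Rightarrow> real^'n" where "D\<psi> y \<equiv> frechet_derivative \<psi> (at y)"

lemma differentiable_\<phi>: "\<phi> differentiable_on U" and differentiable_\<psi>: "\<psi> differentiable_on V"
  using smooth_on_C2(1) smooth_\<phi> smooth_\<psi> by blast+

lemma chart_in_V: "x \<in> U \<Longrightarrow> \<phi> x \<in> V"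
  using image_U by blast

lemma slice_eq_preimage: "M \<inter> U = U \<inter> \<phi> -` S"
proof
  show "U \<inter> \<phi> -` S \<subseteq> M \<inter> U"
  proof
    fix x assume x: "x \<in> U \<inter> \<phi> -` S"
    then obtain m where m: "m \<in> M \<inter> U" "\<phi> x = \<phi> m"
      using slice chart_in_V by (metis IntI imageE vimageE IntD1 IntD2)
    then have "x = m" using left_inverse x by (metis IntD1 IntD2)
    then show "x \<in> M \<inter> U" using m by simp
  qed
qed (use slice in blast)

lemma has_derivative_\<phi>: "x \<in> U \<Longrightarrow> (\<phi> has_derivative D\<phi> x) (at x)"
  by (rule has_derivative_frechet_derivative_on_open[OF differentiable_\<phi> open_U])

lemma has_derivative_\<psi>: "y \<in> V \<Longrightarrow> (\<psi> has_derivative D\<psi> y) (at y)"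
  by (rule has_derivative_frechet_derivative_on_open[OF differentiable_\<psi> open_V])

lemma derivative_left_inverse: "x \<in> U \<Longrightarrow> D\<psi> (\<phi> x) (D\<phi> x v) = v"
  using frechet_derivative_left_inverse[OF open_U _ left_inverse has_derivative_\<phi> has_derivative_\<psi>]
    chart_in_V by blast

lemma derivative_right_inverse:
  assumes "x \<in> U" shows "D\<phi> x (D\<psi> (\<phi> x) s) = s"
proof -
  have "D\<phi> (\<psi> (\<phi> x)) (D\<psi> (\<phi> x) s) = s"
    using frechet_derivative_left_inverse[OF open_V chart_in_V[OF assms] right_inverse
        has_derivative_\<psi>[OF chart_in_V[OF assms]]] has_derivative_\<phi> left_inverse assms
    by simp
  then show ?thesis using left_inverse assms by simp
qed

lemma chart_derivative_tangent_in_slice: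
  assumes x: "x \<in> M \<inter> U" and v: "v \<in> tangent_space M x"
  shows "D\<phi> x v \<in> S"
proof -
  obtain \<gamma> e where e: "e > 0" and \<gamma>M: "\<And>t. t \<in> ball 0 e \<Longrightarrow> \<gamma> t \<in> M" and \<gamma>0: "\<gamma> 0 = x"
    and d\<gamma>: "(\<gamma> has_derivative (\<lambda>t. t *\<^sub>R v)) (at 0)"
    using v unfolding tangent_space_def has_vector_derivative_def by blast
  obtain N where N: "open N" "0 \<in> N" "\<And>t. t \<in> N \<Longrightarrow> \<gamma> t \<in> U"
    using has_derivative_continuous[OF d\<gamma>] open_U x \<gamma>0 unfolding continuous_at_open by (metis IntD2)
  have in_S: "\<phi> (\<gamma> t) \<in> S" if "t \<in> N \<inter> ball 0 e" for t
    using slice \<gamma>M N that by blast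
  have d\<phi>\<gamma>: "((\<lambda>t. \<phi> (\<gamma> t)) has_derivative (\<lambda>t. D\<phi> x (t *\<^sub>R v))) (at 0)"
    using diff_chain_at[OF d\<gamma> has_derivative_\<phi>[of x, folded \<gamma>0]] x \<gamma>0 by (simp add: o_def)
  have "orthogonal z (D\<phi> x v)" if z: "z \<in> S\<^sup>\<bottom>" for z
  proof -
    have "((\<lambda>t. z \<bullet> \<phi> (\<gamma> t)) has_derivative (\<lambda>t. z \<bullet> D\<phi> x (t *\<^sub>R v))) (at 0)"
      using has_derivative_inner[OF has_derivative_const d\<phi>\<gamma>, of z] by simp
    moreover have "z \<bullet> \<phi> (\<gamma> t) = 0" if "t \<in> N \<inter> ball 0 e" for t
      using in_S[OF that] z by (auto simp: orthogonal_comp_def orthogonal_def inner_commute)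
    then have "((\<lambda>t. z \<bullet> \<phi> (\<gamma> t)) has_derivative (\<lambda>t. 0)) (at 0)"
      using N e
      by (intro has_derivative_transform_within_open[OF has_derivative_const[of 0], where s = "N \<inter> ball 0 e"])
         auto
    ultimately have "(\<lambda>t. z \<bullet> D\<phi> x (t *\<^sub>R v)) = (\<lambda>t. 0)" by (rule has_derivative_unique)
    then show ?thesis unfolding orthogonal_def by (metis scaleR_one)
  qed
  then have "D\<phi> x v \<in> S\<^sup>\<bottom>\<^sup>\<bottom>" by (auto simp: orthogonal_comp_def)
  then show ?thesis by (simp add: orthogonal_comp_self[OF subspace_S])
qed

lemma inverse_derivative_slice_in_tangent:
  assumes x: "x \<in> M \<inter> U" and s: "s \<in> S"
  shows "D\<psi> (\<phi> x) s \<in> tangent_space M x"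
proof -
  have \<phi>x: "\<phi> x \<in> V \<inter> S" using slice x by blast
  obtain \<epsilon> where \<epsilon>: "\<epsilon> > 0" "ball (\<phi> x) \<epsilon> \<subseteq> V" using open_V \<phi>x openE by blast
  define e where "e = \<epsilon> / (norm s + 1)"
  have e: "e > 0" using \<epsilon> by (simp add: e_def add_nonneg_pos)
  have "\<psi> (\<phi> x + t *\<^sub>R s) \<in> M" if t: "t \<in> ball 0 e" for t
  proof -
    have "norm (t *\<^sub>R s) \<le> e * norm s" using t by (auto intro!: mult_right_mono simp: dist_real_def)
    also have "\<dots> = \<epsilon> * (norm s / (norm s + 1))" by (simp add: e_def)
    also have "\<dots> < \<epsilon>"
      using mult_strict_left_mono[of "norm s / (norm s + 1)" 1 \<epsilon>] \<epsilon>
      by (simp add: divide_less_eq_1 add_nonneg_pos)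
    finally have "\<phi> x + t *\<^sub>R s \<in> V \<inter> S"
      using \<epsilon> \<phi>x s subspace_S by (auto simp: dist_norm subspace_add subspace_scale)
    then obtain m where "m \<in> M \<inter> U" "\<phi> x + t *\<^sub>R s = \<phi> m" using slice by (metis imageE)
    then show ?thesis using left_inverse by auto
  qed
  moreover have "\<psi> (\<phi> x + 0 *\<^sub>R s) = x" using left_inverse x by simp
  moreover have "((\<lambda>t. \<psi> (\<phi> x + t *\<^sub>R s)) has_vector_derivative D\<psi> (\<phi> x) s) (at 0)"
  proof -
    have "((\<lambda>t::real. \<phi> x + t *\<^sub>R s) has_derivative (\<lambda>t. t *\<^sub>R s)) (at 0)"
      by (auto intro!: derivative_eq_intros)
    from diff_chain_at[OF this]
    have "((\<lambda>t. \<psi> (\<phi> x + t *\<^sub>R s)) has_derivative (\<lambda>t. D\<psi> (\<phi> x) (t *\<^sub>R s))) (at 0)"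
      using has_derivative_\<psi>[of "\<phi> x"] \<phi>x by (simp add: o_def)
    then show ?thesis
      using linear_frechet_derivative_on_open[OF differentiable_\<psi> open_V] \<phi>x
      by (simp add: has_vector_derivative_def linear_scale)
  qed
  ultimately show ?thesis
    unfolding tangent_space_def using e
    by (intro CollectI exI[of _ "\<lambda>t. \<psi> (\<phi> x + t *\<^sub>R s)"] exI[of _ e]) auto
qed

lemma tangent_space_eq:
  assumes x: "x \<in> M \<inter> U"
  shows "tangent_space M x = D\<psi> (\<phi> x) ` S"
proof
  show "tangent_space M x \<subseteq> D\<psi> (\<phi> x) ` S"
  proof
    fix v assume "v \<in> tangent_space M x"
    then have "D\<phi> x v \<in> S" by (rule chart_derivative_tangent_in_slice[OF x])
    moreover have "v = D\<psi> (\<phi> x) (D\<phi> x v)" using derivative_left_inverse x by simp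
    ultimately show "v \<in> D\<psi> (\<phi> x) ` S" by blast
  qed
  show "D\<psi> (\<phi> x) ` S \<subseteq> tangent_space M x"
    using inverse_derivative_slice_in_tangent[OF x] by blast
qed

lemma subspace_tangent_space: "x \<in> M \<inter> U \<Longrightarrow> subspace (tangent_space M x)"
  using tangent_space_eq chart_in_V
    linear_subspace_image[OF linear_frechet_derivative_on_open[OF differentiable_\<psi> open_V] subspace_S]
  by auto


lemma tangent_residual_le:
  assumes x: "x \<in> M \<inter> U" and y: "y \<in> M \<inter> U" and L: "L \<ge> 0"
    and taylor: "norm (\<psi> (\<phi> y) - \<psi> (\<phi> x) - D\<psi> (\<phi> x) (\<phi> y - \<phi> x)) \<le> L * (norm (\<phi> y - \<phi> x))\<^sup>2"
    and lip: "norm (\<phi> y - \<phi> x) \<le> K * norm (y - x)"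
  shows "norm ((y - x) - tangent_proj M x *v (y - x)) \<le> L * K\<^sup>2 * (norm (y - x))\<^sup>2"
proof -
  have T: "subspace (tangent_space M x)" using subspace_tangent_space[OF x] .
  have "\<phi> y - \<phi> x \<in> S" using slice x y subspace_S by (blast intro: subspace_diff)
  then have "D\<psi> (\<phi> x) (\<phi> y - \<phi> x) \<in> tangent_space M x" using tangent_space_eq[OF x] by blast
  then have "norm ((y - x) - tangent_proj M x *v (y - x)) \<le> norm ((y - x) - D\<psi> (\<phi> x) (\<phi> y - \<phi> x))"
    using orthogonal_proj_best_approx[OF T] tangent_proj_apply[OF T] by simp
  also have "\<dots> \<le> L * (norm (\<phi> y - \<phi> x))\<^sup>2" using taylor left_inverse x y by simp
  also have "\<dots> \<le> L * (K * norm (y - x))\<^sup>2" using lip L by (intro mult_left_mono power_mono) auto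
  finally show ?thesis by (simp add: power_mult_distrib)
qed

text \<open>The tangent spaces at \<open>x\<close> and \<open>z\<close> are images of the same \<open>S\<close> under \<open>D\<psi>\<close> at nearby points, and the
  normal vector \<open>w - z\<close> is orthogonal to the second one.\<close>

lemma tangent_proj_normal_le:
  assumes x: "x \<in> M \<inter> U" and z: "z \<in> M \<inter> U"
    and nearest: "\<And>m. m \<in> M \<Longrightarrow> norm (w - z) \<le> norm (w - m)"
    and K: "K \<ge> 0" and L: "L \<ge> 0"
    and D\<phi>_bound: "\<And>v. norm (D\<phi> x v) \<le> K * norm v"
    and lip: "norm (\<phi> x - \<phi> z) \<le> K * norm (x - z)"
    and D\<psi>_lip: "\<And>s. norm (D\<psi> (\<phi> x) s - D\<psi> (\<phi> z) s) \<le> L * norm (\<phi> x - \<phi> z) * norm s"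
  shows "norm (tangent_proj M x *v (w - z)) \<le> L * K\<^sup>2 * norm (x - z) * norm (w - z)"
proof -
  have T: "subspace (tangent_space M x)" using subspace_tangent_space[OF x] .
  define t where "t = orthogonal_proj (tangent_space M x) (w - z)"
  obtain s where s: "s \<in> S" and ts: "t = D\<psi> (\<phi> x) s"
    using orthogonal_proj[OF T] tangent_space_eq[OF x] unfolding t_def by blast
  have ns: "norm s \<le> K * norm t"
    using D\<phi>_bound[of t] derivative_right_inverse x ts by simp
  have "D\<psi> (\<phi> z) s \<in> tangent_space M z" using tangent_space_eq[OF z] s by blast
  then have "(w - z) \<bullet> D\<psi> (\<phi> z) s = 0" using nearest_point_orthogonal_tangent z nearest by blast
  then have "(norm t)\<^sup>2 = (t - D\<psi> (\<phi> z) s) \<bullet> (w - z)"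
    using norm_orthogonal_proj_sq[OF T] unfolding t_def by (simp add: inner_diff_left inner_diff_right inner_commute)
  also have "\<dots> \<le> norm (t - D\<psi> (\<phi> z) s) * norm (w - z)" by (rule norm_cauchy_schwarz)
  also have "norm (t - D\<psi> (\<phi> z) s) \<le> L * norm (\<phi> x - \<phi> z) * norm s"
    using D\<psi>_lip[of s] ts by simp
  also have "\<dots> \<le> L * (K * norm (x - z)) * (K * norm t)"
    using lip ns L K by (intro mult_mono mult_left_mono) auto
  finally have "norm t * norm t \<le> norm t * (L * K\<^sup>2 * norm (x - z) * norm (w - z))"
    by (simp add: mult_right_mono power2_eq_square algebra_simps)
  then have "norm t \<le> L * K\<^sup>2 * norm (x - z) * norm (w - z)"
    using L K by (cases "norm t = 0") (auto simp: mult_le_cancel_left)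
  then show ?thesis using tangent_proj_apply[OF T] unfolding t_def by simp
qed

lemma chart_bounds_near:
  assumes p: "p \<in> U"
  obtains \<rho> K L where "\<rho> > 0" "cball p \<rho> \<subseteq> U" "K \<ge> 0" "L \<ge> 0"
    "\<And>x v. x \<in> cball p \<rho> \<Longrightarrow> norm (D\<phi> x v) \<le> K * norm v"
    "\<And>x y. x \<in> cball p \<rho> \<Longrightarrow> y \<in> cball p \<rho> \<Longrightarrow> norm (\<phi> x - \<phi> y) \<le> K * norm (x - y)"
    "\<And>x y. x \<in> cball p \<rho> \<Longrightarrow> y \<in> cball p \<rho> \<Longrightarrow>
       norm (\<psi> (\<phi> y) - \<psi> (\<phi> x) - D\<psi> (\<phi> x) (\<phi> y - \<phi> x)) \<le> L * (norm (\<phi> y - \<phi> x))\<^sup>2"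
    "\<And>x y s. x \<in> cball p \<rho> \<Longrightarrow> y \<in> cball p \<rho> \<Longrightarrow>
       norm (D\<psi> (\<phi> x) s - D\<psi> (\<phi> y) s) \<le> L * norm (\<phi> x - \<phi> y) * norm s"
proof -
  obtain r0 where r0: "r0 > 0" "cball p r0 \<subseteq> U"
    using open_U p open_contains_cball by blast
  obtain r1 where r1: "r1 > 0" "cball (\<phi> p) r1 \<subseteq> V"
    using open_V chart_in_V[OF p] open_contains_cball by blast
  obtain K where K: "K \<ge> 0" "\<And>x v. x \<in> cball p r0 \<Longrightarrow> norm (D\<phi> x v) \<le> K * norm v"
    using frechet_derivative_bounded_on_compact[OF differentiable_\<phi> open_U compact_cball r0(2)]
      smooth_on_C2(2)[OF smooth_\<phi>] differentiable_imp_continuous_on by metis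
  have \<phi>_lip: "norm (\<phi> x - \<phi> y) \<le> K * norm (x - y)" if "x \<in> cball p r0" "y \<in> cball p r0" for x y
    using lipschitz_of_frechet_derivative_bound[OF differentiable_\<phi> open_U convex_cball r0(2) K(2) that] .
  obtain L where L: "L \<ge> 0" and D\<psi>_lip: "\<And>a b s. a \<in> cball (\<phi> p) r1 \<Longrightarrow> b \<in> cball (\<phi> p) r1 \<Longrightarrow>
      norm (D\<psi> a s - D\<psi> b s) \<le> L * norm (a - b) * norm s"
    using frechet_derivative_lipschitz_on_compact[OF smooth_\<psi> open_V compact_cball convex_cball r1(2)] by metis
  define \<rho> where "\<rho> = min r0 (r1 / (K + 1))"
  have \<rho>: "\<rho> > 0" "cball p \<rho> \<subseteq> cball p r0" using r0 r1 K by (auto simp: \<rho>_def)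
  have \<phi>_ball: "\<phi> x \<in> cball (\<phi> p) r1" if "x \<in> cball p \<rho>" for x
  proof -
    have "norm (\<phi> p - \<phi> x) \<le> K * norm (p - x)" using \<phi>_lip \<rho>(2) that r0(1) by auto
    also have "\<dots> \<le> K * (r1 / (K + 1))" using that K by (intro mult_left_mono) (auto simp: \<rho>_def dist_norm)
    also have "\<dots> \<le> r1" using K r1 by (simp add: field_simps)
    finally show ?thesis by (simp add: dist_norm)
  qed
  show thesis
  proof (rule that[OF \<rho>(1) _ K(1) L])
    show "cball p \<rho> \<subseteq> U" using \<rho>(2) r0(2) by blast
    show "norm (D\<phi> x v) \<le> K * norm v" if "x \<in> cball p \<rho>" for x v using K(2) \<rho>(2) that by blast
    show "norm (\<phi> x - \<phi> y) \<le> K * norm (x - y)" if "x \<in> cball p \<rho>" "y \<in> cball p \<rho>" for x y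
      using \<phi>_lip \<rho>(2) that by blast
    show "norm (D\<psi> (\<phi> x) s - D\<psi> (\<phi> y) s) \<le> L * norm (\<phi> x - \<phi> y) * norm s"
      if "x \<in> cball p \<rho>" "y \<in> cball p \<rho>" for x y s
      using D\<psi>_lip \<phi>_ball that by blast
    show "norm (\<psi> (\<phi> y) - \<psi> (\<phi> x) - D\<psi> (\<phi> x) (\<phi> y - \<phi> x)) \<le> L * (norm (\<phi> y - \<phi> x))\<^sup>2"
      if "x \<in> cball p \<rho>" "y \<in> cball p \<rho>" for x y
      using taylor_remainder_le_of_lipschitz_derivative[OF differentiable_\<psi> open_V convex_cball r1(2) L D\<psi>_lip]
        \<phi>_ball that by blast
  qed
qed

lemma local_curvature_estimates:
  assumes p: "p \<in> U"
  obtains \<rho> C where "\<rho> > 0" "C \<ge> 0" "closed (M \<inter> cball p \<rho>)"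
    "\<And>x y. x \<in> M \<inter> cball p \<rho> \<Longrightarrow> y \<in> M \<inter> cball p \<rho> \<Longrightarrow>
       norm ((y - x) - tangent_proj M x *v (y - x)) \<le> C * (norm (y - x))\<^sup>2"
    "\<And>x z w. x \<in> M \<inter> cball p \<rho> \<Longrightarrow> z \<in> M \<inter> cball p \<rho> \<Longrightarrow> (\<And>m. m \<in> M \<Longrightarrow> norm (w - z) \<le> norm (w - m)) \<Longrightarrow>
       norm (tangent_proj M x *v (w - z)) \<le> C * norm (x - z) * norm (w - z)"
proof -
  obtain \<rho> K L where \<rho>: "\<rho> > 0" "cball p \<rho> \<subseteq> U" and K: "K \<ge> 0" and L: "L \<ge> 0"
    and D\<phi>_bound: "\<And>x v. x \<in> cball p \<rho> \<Longrightarrow> norm (D\<phi> x v) \<le> K * norm v"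
    and \<phi>_lip: "\<And>x y. x \<in> cball p \<rho> \<Longrightarrow> y \<in> cball p \<rho> \<Longrightarrow> norm (\<phi> x - \<phi> y) \<le> K * norm (x - y)"
    and taylor: "\<And>x y. x \<in> cball p \<rho> \<Longrightarrow> y \<in> cball p \<rho> \<Longrightarrow>
       norm (\<psi> (\<phi> y) - \<psi> (\<phi> x) - D\<psi> (\<phi> x) (\<phi> y - \<phi> x)) \<le> L * (norm (\<phi> y - \<phi> x))\<^sup>2"
    and D\<psi>_lip: "\<And>x y s. x \<in> cball p \<rho> \<Longrightarrow> y \<in> cball p \<rho> \<Longrightarrow>
       norm (D\<psi> (\<phi> x) s - D\<psi> (\<phi> y) s) \<le> L * norm (\<phi> x - \<phi> y) * norm s"
    using chart_bounds_near[OF p] by blast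
  show thesis
  proof (rule that[OF \<rho>(1), of "L * K\<^sup>2"])
    show "L * K\<^sup>2 \<ge> 0" using L by simp
    have "M \<inter> cball p \<rho> = cball p \<rho> \<inter> \<phi> -` S" using slice_eq_preimage \<rho>(2) by blast
    moreover have "continuous_on (cball p \<rho>) \<phi>"
      using differentiable_imp_continuous_on[OF differentiable_\<phi>] \<rho>(2) by (rule continuous_on_subset)
    ultimately show "closed (M \<inter> cball p \<rho>)"
      using continuous_closed_preimage[OF _ closed_cball closed_subspace[OF subspace_S]] by simp
    show "norm ((y - x) - tangent_proj M x *v (y - x)) \<le> L * K\<^sup>2 * (norm (y - x))\<^sup>2"
      if "x \<in> M \<inter> cball p \<rho>" "y \<in> M \<inter> cball p \<rho>" for x y
      using that \<rho>(2) by (intro tangent_residual_le[OF _ _ L taylor] \<phi>_lip[simplified norm_minus_commute]) auto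
    show "norm (tangent_proj M x *v (w - z)) \<le> L * K\<^sup>2 * norm (x - z) * norm (w - z)"
      if "x \<in> M \<inter> cball p \<rho>" "z \<in> M \<inter> cball p \<rho>" "\<And>m. m \<in> M \<Longrightarrow> norm (w - z) \<le> norm (w - m)"
      for x z w
      using that \<rho>(2) by (intro tangent_proj_normal_le[OF _ _ _ K L D\<phi>_bound \<phi>_lip D\<psi>_lip]) auto
  qed
qed

end

lemma smooth_embedded_submanifold_curvature_estimates:
  fixes M :: "(real^'n) set"
  assumes M: "smooth_embedded_submanifold M" and p: "p \<in> M"
  obtains \<rho> C where "\<rho> > 0" "C \<ge> 0" "closed (M \<inter> cball p \<rho>)"
    "\<And>x y. x \<in> M \<inter> cball p \<rho> \<Longrightarrow> y \<in> M \<inter> cball p \<rho> \<Longrightarrow>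
       norm ((y - x) - tangent_proj M x *v (y - x)) \<le> C * (norm (y - x))\<^sup>2"
    "\<And>x z w. x \<in> M \<inter> cball p \<rho> \<Longrightarrow> z \<in> M \<inter> cball p \<rho> \<Longrightarrow> (\<And>m. m \<in> M \<Longrightarrow> norm (w - z) \<le> norm (w - m)) \<Longrightarrow>
       norm (tangent_proj M x *v (w - z)) \<le> C * norm (x - z) * norm (w - z)"
proof -
  obtain U V S :: "(real^'n) set" and \<phi> \<psi> :: "real^'n \<Rightarrow> real^'n" where "open U" "p \<in> U" "open V" "subspace S"
    "smooth_on U \<phi>" "smooth_on V \<psi>" "\<phi> ` U = V" "\<forall>x\<in>U. \<psi> (\<phi> x) = x" "\<forall>y\<in>V. \<phi> (\<psi> y) = y"
    "\<phi> ` (M \<inter> U) = V \<inter> S"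
    using M p unfolding smooth_embedded_submanifold_def by metis
  then interpret slice_chart M U V S \<phi> \<psi> by unfold_locales auto
  show thesis using local_curvature_estimates[OF \<open>p \<in> U\<close>] that by blast
qed

section \<open>Sequences with quadratically contracting error\<close>

lemma convergent_of_halving_steps:
  fixes x :: "nat \<Rightarrow> 'a::banach"
  assumes step: "\<And>k. norm (x (Suc k) - x k) \<le> B * e k"
    and halving: "\<And>k. e (Suc k) \<le> e k / 2" and e: "\<And>k. e k \<ge> 0" and B: "B \<ge> 0"
  obtains xh where "x \<longlonglongrightarrow> xh" "e \<longlonglongrightarrow> 0" "\<And>k. norm (x k - xh) \<le> 2 * B * e k"
proof -
  have tail: "norm (x (k + i) - x k) + 2 * B * e (k + i) \<le> 2 * B * e k" for k i
  proof (induction i)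
    case (Suc i)
    have "norm (x (k + Suc i) - x k) \<le> norm (x (Suc (k + i)) - x (k + i)) + norm (x (k + i) - x k)"
      using norm_triangle_ineq[of "x (Suc (k + i)) - x (k + i)" "x (k + i) - x k"] by simp
    then show ?case
      using Suc.IH step[of "k + i"] mult_left_mono[OF halving[of "k + i"] B] by simp
  qed simp
  have tail': "norm (x m - x k) \<le> 2 * B * e k" if "k \<le> m" for k m
  proof -
    obtain i where "m = k + i" using \<open>k \<le> m\<close> le_iff_add by blast
    moreover have "2 * B * e m \<ge> 0" using B e by simp
    ultimately show ?thesis using tail[of k i] by simp
  qed
  have "e k \<le> e 0 * (1/2) ^ k" for k
    using halving by (induction k) (auto intro: order_trans)
  then have e_lim: "e \<longlonglongrightarrow> 0"
    using e by (intro Lim_null_comparison[OF always_eventually tendsto_mult_right_zero[OF LIMSEQ_power_zero]]) auto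
  then have lim: "(\<lambda>k. 2 * B * e k) \<longlonglongrightarrow> 0" using tendsto_mult_right_zero by blast
  have "Cauchy x"
  proof (rule CauchyI)
    fix \<epsilon> :: real assume "\<epsilon> > 0"
    then have "eventually (\<lambda>k. 2 * B * e k < \<epsilon> / 2) sequentially"
      using lim by (intro order_tendstoD(2)) auto
    then obtain N where "2 * B * e N < \<epsilon> / 2"
      by (auto simp: eventually_sequentially)
    then have "norm (x m - x n) < \<epsilon>" if "N \<le> m" "N \<le> n" for m n
      using tail'[OF that(1)] tail'[OF that(2)] norm_triangle_ineq4[of "x m - x N" "x n - x N"] by simp
    then show "\<exists>N. \<forall>m\<ge>N. \<forall>n\<ge>N. norm (x m - x n) < \<epsilon>" by blast
  qed
  then obtain xh where xh: "x \<longlonglongrightarrow> xh" using Cauchy_convergent_iff convergent_def by blast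
  have "norm (x k - xh) \<le> 2 * B * e k" for k
  proof -
    have "(\<lambda>m. x m - x k) \<longlonglongrightarrow> xh - x k" using xh by (intro tendsto_diff tendsto_const)
    moreover have "eventually (\<lambda>m. norm (x m - x k) \<le> 2 * B * e k) sequentially"
      using tail' by (auto simp: eventually_sequentially)
    ultimately have "norm (xh - x k) \<le> 2 * B * e k" by (rule Lim_norm_ubound[OF trivial_limit_sequentially])
    then show ?thesis by (simp add: norm_minus_commute)
  qed
  with xh e_lim show thesis by (rule that)
qed

lemma quadratic_contraction_confined:
  fixes x :: "nat \<Rightarrow> 'a::real_normed_vector"
  assumes step: "\<And>k. x k \<in> A \<Longrightarrow> norm (x k - c) \<le> R \<Longrightarrow>
      x (Suc k) \<in> A \<and> e (x (Suc k)) \<le> Q * (e (x k))\<^sup>2 \<and> norm (x (Suc k) - x k) \<le> B * e (x k)"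
    and e: "\<And>y. e y \<ge> 0" and B: "B \<ge> 0" and Q: "Q \<ge> 0"
    and start: "x 0 \<in> A" "norm (x 0 - c) \<le> e (x 0)" "e (x 0) < \<delta>"
    and \<delta>: "(1 + 2 * B) * \<delta> \<le> R" "Q * \<delta> \<le> 1/2"
  shows "x k \<in> A \<and> norm (x k - c) \<le> R \<and> e (x (Suc k)) \<le> e (x k) / 2"
proof -
  let ?e0 = "e (x 0)"
  have small: "e (x (Suc k)) \<le> e (x k) / 2" if "e (x (Suc k)) \<le> Q * (e (x k))\<^sup>2" "e (x k) \<le> ?e0" for k
  proof -
    have "e (x k) * e (x k) \<le> \<delta> * e (x k)"
      using that(2) start(3) e by (intro mult_right_mono) auto
    then have "Q * (e (x k))\<^sup>2 \<le> (Q * \<delta>) * e (x k)"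
      using Q by (simp add: power2_eq_square mult_left_mono mult.assoc)
    also have "\<dots> \<le> (1/2) * e (x k)" by (rule mult_right_mono[OF \<delta>(2) e])
    finally show ?thesis using that(1) by simp
  qed
  have near: "norm (x k - c) \<le> R" if "norm (x k - x 0) \<le> 2 * B * ?e0" for k
  proof -
    have "norm (x k - c) \<le> norm (x k - x 0) + norm (x 0 - c)"
      using norm_triangle_ineq[of "x k - x 0" "x 0 - c"] by simp
    also have "\<dots> \<le> (1 + 2 * B) * ?e0" using that start(2) by (simp add: algebra_simps)
    also have "\<dots> \<le> (1 + 2 * B) * \<delta>" using start(3) B by (intro mult_left_mono) auto
    also have "\<dots> \<le> R" by (rule \<delta>(1))
    finally show ?thesis .
  qed
  have inv: "x k \<in> A \<and> norm (x k - x 0) + 2 * B * e (x k) \<le> 2 * B * ?e0 \<and> e (x k) \<le> ?e0" for k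
  proof (induction k)
    case (Suc k)
    then have k: "x k \<in> A" "norm (x k - x 0) + 2 * B * e (x k) \<le> 2 * B * ?e0" "e (x k) \<le> ?e0"
      by auto
    have "2 * B * e (x k) \<ge> 0" using e B by simp
    then have "norm (x k - x 0) \<le> 2 * B * ?e0" using k(2) by linarith
    then have s: "x (Suc k) \<in> A" "e (x (Suc k)) \<le> e (x k) / 2" "norm (x (Suc k) - x k) \<le> B * e (x k)"
      using step[OF k(1) near] small k(3) by auto
    have "norm (x (Suc k) - x 0) \<le> norm (x (Suc k) - x k) + norm (x k - x 0)"
      using norm_triangle_ineq[of "x (Suc k) - x k" "x k - x 0"] by simp
    then show ?case using s k mult_left_mono[OF s(2) B] e[of "x (Suc k)"] by simp
  qed (use start in simp)
  have "2 * B * e (x k) \<ge> 0" using e B by simp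
  then have "norm (x k - x 0) \<le> 2 * B * ?e0" using inv[of k] by linarith
  then show ?thesis using inv step near small by blast
qed

section \<open>Local convergence of the projected Newton iteration\<close>

lemma infdist_lessE:
  assumes "A \<noteq> {}" "infdist x A < e"
  obtains a where "a \<in> A" "dist x a < e"
proof -
  have "bdd_below ((\<lambda>a. dist x a) ` A)" by (rule bdd_belowI[of _ 0]) auto
  moreover have "(INF a\<in>A. dist x a) < e" using assms by (simp add: infdist_notempty)
  ultimately show ?thesis using cINF_less_iff[OF assms(1)] that by blast
qed

lemma nearest_point_le_infdist:
  assumes "dist w z = infdist w M" "m \<in> M"
  shows "norm (w - z) \<le> norm (w - m)"
  using assms infdist_le[OF assms(2), of w] by (simp add: dist_norm)

lemma nearest_point_step:
  assumes x: "x \<in> M" and nearest: "\<And>m. m \<in> M \<Longrightarrow> norm (x + d - z) \<le> norm (x + d - m)"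
  shows "norm (x + d - z) \<le> norm d" and "norm (z - x) \<le> 2 * norm d"
proof -
  show "norm (x + d - z) \<le> norm d" using nearest[OF x] by simp
  then show "norm (z - x) \<le> 2 * norm d"
    using norm_triangle_ineq4[of "x + d - x" "x + d - z"] by (simp add: norm_minus_commute)
qed

lemma residual_le_square:
  fixes \<mu> :: real
  assumes r: "norm r / \<mu> \<le> L3 * \<mu> powr q" and \<mu>: "0 < \<mu>" "\<mu> \<le> 1" and q: "1 \<le> q" and L3: "0 \<le> L3"
  shows "norm r \<le> L3 * \<mu>\<^sup>2"
proof -
  have "norm r \<le> L3 * \<mu> powr q * \<mu>" using r \<mu>(1) by (simp add: divide_le_eq)
  also have "\<dots> \<le> L3 * \<mu> powr 1 * \<mu>"
    using powr_mono'[OF q _ \<mu>(2)] \<mu>(1) L3 by (intro mult_right_mono mult_left_mono) auto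
  finally show ?thesis using \<mu>(1) by (simp add: power2_eq_square mult.assoc)
qed

lemma shifted_matrix_vector_mult:
  fixes J P :: "real^'n^'n"
  shows "(J ** P + c *\<^sub>R mat 1) *v u = J *v (P *v u) + c *\<^sub>R u"
  by (simp add: matrix_vector_mult_add_rdistrib matrix_vector_mul_assoc scaleR_matrix_vector_assoc[symmetric])

lemma smallo_of_le_vanishing_factor:
  fixes f g h :: "nat \<Rightarrow> real"
  assumes "\<And>k. f k \<le> g k * h k" "g \<longlonglongrightarrow> 0" "\<And>k. 0 \<le> f k" "\<And>k. 0 \<le> h k"
  shows "f \<in> o(h)"
proof (rule landau_o.smallI)
  fix c :: real assume "c > 0"
  with assms(2) have "eventually (\<lambda>k. g k < c) sequentially" by (rule order_tendstoD)
  then show "eventually (\<lambda>k. norm (f k) \<le> c * norm (h k)) sequentially"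
  proof eventually_elim
    case (elim k)
    then show ?case using assms(1)[of k] assms(3,4)[of k] mult_right_mono[of "g k" c "h k"] by simp
  qed
qed

lemma mnorm_matrix_inv_le_imp_norm_ge:
  fixes A :: "real^'n^'n"
  assumes A: "invertible A" and inv: "mnorm (matrix_inv A) \<le> 1 / \<mu>" and \<mu>: "\<mu> > 0"
  shows "\<mu> * norm u \<le> norm (A *v u)"
proof -
  have "matrix_inv A ** A = mat 1"
    using A unfolding invertible_def matrix_inv_def by (metis (mono_tags, lifting) someI_ex)
  then have "norm u = norm (matrix_inv A *v (A *v u))" by (simp add: matrix_vector_mul_assoc)
  also have "\<dots> \<le> mnorm (matrix_inv A) * norm (A *v u)"
    unfolding mnorm_def by (rule onorm) (simp add: linear_conv_bounded_linear)
  also have "\<dots> \<le> (1 / \<mu>) * norm (A *v u)" by (rule mult_right_mono[OF inv]) simp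
  finally show ?thesis using \<mu> by (simp add: field_simps)
qed

lemma locally_lipschitz_imp_continuous:
  assumes "locally_lipschitz F"
  shows "continuous_on UNIV F"
proof -
  have "isCont F x" for x
  proof -
    obtain e L where e: "e > 0" and lip: "L-lipschitz_on (cball x e) F"
      using assms unfolding locally_lipschitz_def by blast
    have "x \<in> interior (cball x e)" using e by (simp add: interior_cball)
    then show ?thesis using continuous_on_interior[OF lipschitz_on_continuous_on[OF lip]] by blast
  qed
  then show ?thesis by (simp add: continuous_at_imp_continuous_on)
qed

text \<open>At a zero of \<open>F\<close> the iterate stays put; otherwise \<open>x'\<close> may be any nearest point of \<open>M\<close>
  to \<open>x + d\<close>, as the metric projection onto \<open>M\<close> need not be unique.\<close>

definition projected_newton_step ::
  "(real^'n \<Rightarrow> real^'n) \<Rightarrow> (real^'n) set \<Rightarrow> real \<Rightarrow> real \<Rightarrow>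
   real^'n \<Rightarrow> real^'n^'n \<Rightarrow> real^'n \<Rightarrow> real^'n \<Rightarrow> real^'n \<Rightarrow> bool" where
  "projected_newton_step F M q L3 x J d r x' \<longleftrightarrow>
     (F x = 0 \<longrightarrow> x' = x) \<and>
     (F x \<noteq> 0 \<longrightarrow>
        J \<in> B_jac F x \<and>
        (J ** tangent_proj M x + norm (F x) *\<^sub>R mat 1) *v d = - F x + r \<and>
        norm r / norm (F x) \<le> L3 * norm (F x) powr q \<and>
        x' \<in> M \<and> dist (x + d) x' = infdist (x + d) M)"

text \<open>\<open>semismooth\<close>, \<open>regular\<close> and \<open>error_bound\<close> are (A1), the lower bound implied by (A2), and (A3)
  on a ball around \<open>xs\<close>; \<open>tangent_residual\<close> and \<open>tangent_proj_normal\<close> express that \<open>M\<close> is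
  curved at most quadratically there.\<close>

locale projected_newton_local =
  fixes F :: "real^'n \<Rightarrow> real^'n" and M :: "(real^'n) set" and xs :: "real^'n"
    and \<rho> L1 L2 L3 C \<gamma> :: real
  assumes continuous_F: "continuous_on UNIV F"
    and xs_solution: "xs \<in> {z. F z = 0} \<inter> M"
    and \<rho>_pos: "0 < \<rho>" and L1_nonneg: "0 \<le> L1" and L2_pos: "0 < L2" and L3_nonneg: "0 \<le> L3"
    and C_nonneg: "0 \<le> C" and \<gamma>_pos: "0 < \<gamma>"
    and closed_M: "closed (M \<inter> cball xs \<rho>)"
    and lipschitz_F: "L2-lipschitz_on (cball xs \<rho>) F"
    and B_jac_bound: "\<And>x J v. x \<in> M \<inter> cball xs \<rho> \<Longrightarrow> J \<in> B_jac F x \<Longrightarrow> norm (J *v v) \<le> L2 * norm v"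
    and semismooth: "\<And>x y J. x \<in> M \<inter> cball xs \<rho> \<Longrightarrow> y \<in> M \<inter> cball xs \<rho> \<Longrightarrow> J \<in> B_jac F x \<Longrightarrow>
      norm (F y - F x - J *v (y - x)) \<le> L1 * (norm (y - x))\<^sup>2"
    and regular: "\<And>x J u. x \<in> M \<inter> cball xs \<rho> \<Longrightarrow> J \<in> B_jac F x \<Longrightarrow> F x \<noteq> 0 \<Longrightarrow>
      norm (F x) * norm u \<le> norm ((J ** tangent_proj M x + norm (F x) *\<^sub>R mat 1) *v u)"
    and error_bound: "\<And>x. x \<in> M \<inter> cball xs \<rho> \<Longrightarrow> \<gamma> * infdist x ({z. F z = 0} \<inter> M) \<le> norm (F x)"
    and tangent_residual: "\<And>x y. x \<in> M \<inter> cball xs \<rho> \<Longrightarrow> y \<in> M \<inter> cball xs \<rho> \<Longrightarrow>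
      norm ((y - x) - tangent_proj M x *v (y - x)) \<le> C * (norm (y - x))\<^sup>2"
    and tangent_proj_normal: "\<And>x z w. x \<in> M \<inter> cball xs \<rho> \<Longrightarrow> z \<in> M \<inter> cball xs \<rho> \<Longrightarrow>
      (\<And>m. m \<in> M \<Longrightarrow> norm (w - z) \<le> norm (w - m)) \<Longrightarrow>
      norm (tangent_proj M x *v (w - z)) \<le> C * norm (x - z) * norm (w - z)"
begin

abbreviation solutions :: "(real^'n) set" where "solutions \<equiv> {z. F z = 0} \<inter> M"

definition c_dir :: real where "c_dir = 2 * (L1 + L2 * C + L3 * L2\<^sup>2) / \<gamma> + 2"
definition c_res :: real where "c_res = 4 * L1 * c_dir\<^sup>2 + L3 * L2\<^sup>2 + L2 * c_dir + 6 * L2 * C * c_dir\<^sup>2"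
definition r_basin :: real where "r_basin = min (\<rho> / (3 + 4 * c_dir)) (1 / L2)"
definition c_contr :: real where "c_contr = 4 * c_res / \<gamma>"
definition c_step :: real where "c_step = 4 * c_dir"
definition r_start :: real where "r_start = min (r_basin / (1 + 2 * c_step)) (1 / (2 * c_contr + 1))"

lemma constant_bounds: "2 \<le> c_dir" "0 \<le> c_res" "0 < r_basin" "L2 * r_basin \<le> 1"
  "3 * r_basin + 4 * c_dir * r_basin \<le> \<rho>"
proof -
  show c_dir: "2 \<le> c_dir" using L1_nonneg L2_pos L3_nonneg C_nonneg \<gamma>_pos by (simp add: c_dir_def)
  then show "0 \<le> c_res" using L1_nonneg L2_pos L3_nonneg C_nonneg by (simp add: c_res_def)
  show "0 < r_basin" using \<rho>_pos L2_pos c_dir by (simp add: r_basin_def)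
  have "r_basin \<le> \<rho> / (3 + 4 * c_dir)" "r_basin \<le> 1 / L2" by (simp_all add: r_basin_def)
  then show "3 * r_basin + 4 * c_dir * r_basin \<le> \<rho>" "L2 * r_basin \<le> 1"
    using c_dir L2_pos by (simp_all add: field_simps)
qed

lemma r_basin_le: "r_basin \<le> \<rho>" "3 * r_basin \<le> \<rho>" "r_basin + 4 * c_dir * r_basin \<le> \<rho>"
proof -
  have "0 \<le> 4 * c_dir * r_basin" using constant_bounds(1,3) by simp
  then show "r_basin \<le> \<rho>" "3 * r_basin \<le> \<rho>" "r_basin + 4 * c_dir * r_basin \<le> \<rho>"
    using constant_bounds(3,5) by linarith+
qed

lemma F_lipschitz: "x \<in> cball xs \<rho> \<Longrightarrow> y \<in> cball xs \<rho> \<Longrightarrow> norm (F x - F y) \<le> L2 * norm (x - y)"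
  using lipschitz_onD[OF lipschitz_F] by (simp add: dist_norm)

lemma norm_F_le_dist_solution:
  assumes "x \<in> cball xs \<rho>" "xb \<in> solutions \<inter> cball xs \<rho>"
  shows "norm (F x) \<le> L2 * norm (xb - x)"
  using F_lipschitz[of x xb] assms by (simp add: norm_minus_commute)

lemma F_eq_0_if_infdist_0:
  assumes "infdist x solutions = 0"
  shows "F x = 0"
proof -
  have "solutions \<noteq> {}" using xs_solution by blast
  then have "x \<in> closure solutions" using assms by (simp add: in_closure_iff_infdist_zero)
  moreover have "closed {z. F z = 0}"
    using continuous_closed_preimage_constant[OF continuous_F closed_UNIV] by simp
  ultimately show ?thesis using closure_minimal[of solutions "{z. F z = 0}"] by blast
qed

lemma newton_direction_bound:
  assumes x: "x \<in> M \<inter> cball xs \<rho>" and xb: "xb \<in> solutions \<inter> cball xs \<rho>"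
    and J: "J \<in> B_jac F x" and Fx: "F x \<noteq> 0"
    and eq: "(J ** tangent_proj M x + norm (F x) *\<^sub>R mat 1) *v d = - F x + r"
    and r: "norm r \<le> L3 * (norm (F x))\<^sup>2"
    and close: "\<gamma> * norm (xb - x) \<le> 2 * norm (F x)"
  shows "norm d \<le> c_dir * norm (xb - x)"
proof -
  \<comment> \<open>compare \<open>d\<close> with the step \<open>e\<close> that would land exactly on the solution \<open>xb\<close>\<close>
  define \<mu> P e where "\<mu> = norm (F x)" and "P = tangent_proj M x" and "e = xb - x"
  define K1 where "K1 = L1 + L2 * C + L3 * L2\<^sup>2"
  have \<mu>: "0 < \<mu>" "\<mu> \<le> L2 * norm e"
    using Fx norm_F_le_dist_solution x xb by (auto simp: \<mu>_def e_def)
  have "norm (F xb - F x - J *v (xb - x)) \<le> L1 * (norm e)\<^sup>2"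
    using semismooth[OF x _ J, of xb] xb by (simp add: e_def)
  moreover have "F xb - F x - J *v (xb - x) = - (F x + J *v e)" using xb by (simp add: e_def)
  ultimately have lin: "norm (F x + J *v e) \<le> L1 * (norm e)\<^sup>2" by (metis norm_minus_cancel)
  have "norm (e - P *v e) \<le> C * (norm e)\<^sup>2"
    using tangent_residual[OF x, of xb] xb by (simp add: P_def e_def)
  then have "L2 * norm (e - P *v e) \<le> L2 * (C * (norm e)\<^sup>2)" using L2_pos by simp
  then have tan: "norm (J *v (e - P *v e)) \<le> L2 * (C * (norm e)\<^sup>2)"
    using B_jac_bound[OF x J, of "e - P *v e"] by linarith
  have "(norm (F x))\<^sup>2 \<le> (L2 * norm e)\<^sup>2" using \<mu> by (intro power_mono) (auto simp: \<mu>_def)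
  then have "L3 * (norm (F x))\<^sup>2 \<le> L3 * (L2 * norm e)\<^sup>2" using L3_nonneg by (rule mult_left_mono)
  then have res: "norm r \<le> L3 * L2\<^sup>2 * (norm e)\<^sup>2"
    using r by (simp add: power_mult_distrib mult.assoc)
  define A where "A = J ** P + \<mu> *\<^sub>R mat 1"
  have "A *v (d - e) = (- F x + r) - (J *v (P *v e) + \<mu> *\<^sub>R e)"
    using eq by (simp add: A_def P_def \<mu>_def matrix_vector_mult_diff_distrib shifted_matrix_vector_mult)
  also have "\<dots> = - (F x + J *v e) + J *v (e - P *v e) + r - \<mu> *\<^sub>R e"
    by (simp add: matrix_vector_mult_diff_distrib algebra_simps)
  finally have Ade: "A *v (d - e) = - (F x + J *v e) + J *v (e - P *v e) + r - \<mu> *\<^sub>R e" .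
  have "\<mu> * norm (d - e) \<le> norm (A *v (d - e))"
    using regular[OF x J Fx] by (simp add: A_def P_def \<mu>_def)
  also have "\<dots> = norm (- (F x + J *v e) + J *v (e - P *v e) + r - \<mu> *\<^sub>R e)" by (simp only: Ade)
  also have "\<dots> \<le> norm (F x + J *v e) + norm (J *v (e - P *v e)) + norm r + \<mu> * norm e"
    using norm_triangle_ineq4[of "- (F x + J *v e) + J *v (e - P *v e) + r" "\<mu> *\<^sub>R e"]
      norm_triangle_ineq[of "- (F x + J *v e) + J *v (e - P *v e)" r]
      norm_triangle_ineq[of "- (F x + J *v e)" "J *v (e - P *v e)"] \<mu>(1)
      norm_minus_cancel[of "F x + J *v e"]
    by simp
  also have "\<dots> \<le> K1 * (norm e)\<^sup>2 + \<mu> * norm e"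
    using lin tan res unfolding K1_def by (simp add: algebra_simps)
  also have "K1 * (norm e)\<^sup>2 \<le> \<mu> * (2 * K1 / \<gamma> * norm e)"
  proof -
    have "K1 * (norm e)\<^sup>2 = (K1 * norm e / \<gamma>) * (\<gamma> * norm e)"
      using \<gamma>_pos by (simp add: power2_eq_square)
    also have "\<dots> \<le> (K1 * norm e / \<gamma>) * (2 * \<mu>)"
      using close \<gamma>_pos L1_nonneg L2_pos C_nonneg L3_nonneg
      by (intro mult_left_mono) (auto simp: K1_def \<mu>_def e_def)
    finally show ?thesis by (simp add: field_simps)
  qed
  finally have "\<mu> * norm (d - e) \<le> \<mu> * ((2 * K1 / \<gamma> + 1) * norm e)"
    by (simp add: algebra_simps)
  then have "norm (d - e) \<le> (2 * K1 / \<gamma> + 1) * norm e" by (rule mult_left_le_imp_le[OF _ \<mu>(1)])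
  then show ?thesis
    using norm_triangle_ineq[of "d - e" e] unfolding c_dir_def K1_def e_def by (simp add: algebra_simps)
qed

lemma residual_after_step_le:
  assumes x: "x \<in> M \<inter> cball xs \<rho>" and xb: "xb \<in> solutions \<inter> cball xs \<rho>" and z: "z \<in> M \<inter> cball xs \<rho>"
    and J: "J \<in> B_jac F x"
    and eq: "(J ** tangent_proj M x + norm (F x) *\<^sub>R mat 1) *v d = - F x + r"
    and r: "norm r \<le> L3 * (norm (F x))\<^sup>2"
    and nearest: "\<And>m. m \<in> M \<Longrightarrow> norm (x + d - z) \<le> norm (x + d - m)"
  shows "norm (F z) \<le> (4 * L1 + 6 * L2 * C) * (norm d)\<^sup>2 + L2 * norm (xb - x) * norm d
    + L3 * L2\<^sup>2 * (norm (xb - x))\<^sup>2"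
proof -
  define \<mu> P w ne nd where "\<mu> = norm (F x)" and "P = tangent_proj M x" and "w = x + d"
    and "ne = norm (xb - x)" and "nd = norm d"
  have wz: "norm (w - z) \<le> nd" and zx: "norm (z - x) \<le> 2 * nd"
    using nearest_point_step[of x M d z] x nearest unfolding w_def nd_def by auto
  have "J *v (P *v d) = - F x + r - \<mu> *\<^sub>R d"
    using eq unfolding shifted_matrix_vector_mult by (simp add: P_def \<mu>_def algebra_simps)
  moreover have "z - x = d - (w - z)" by (simp add: w_def)
  \<comment> \<open>linearisation error, inexactness, regularisation, and two curvature terms of \<open>M\<close>\<close>
  ultimately have "F z = (F z - F x - J *v (z - x)) + r - \<mu> *\<^sub>R d - J *v (P *v (w - z))
      + J *v ((z - x) - P *v (z - x))"
    by (simp add: matrix_vector_mult_diff_distrib algebra_simps)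
  then have "norm (F z) = norm ((F z - F x - J *v (z - x)) + r - \<mu> *\<^sub>R d - J *v (P *v (w - z))
      + J *v ((z - x) - P *v (z - x)))"
    by (rule arg_cong)
  also have "\<dots> \<le> norm (F z - F x - J *v (z - x)) + norm r + norm (\<mu> *\<^sub>R d)
      + norm (J *v (P *v (w - z))) + norm (J *v ((z - x) - P *v (z - x)))"
    by (intro order_trans[OF norm_triangle_ineq] order_trans[OF norm_triangle_ineq4] add_mono
        order_trans[OF norm_triangle_ineq] order_refl)
  also have "\<dots> \<le> L1 * (2 * nd)\<^sup>2 + L3 * L2\<^sup>2 * ne\<^sup>2 + L2 * ne * nd + L2 * (C * (2 * nd) * nd)
      + L2 * (C * (2 * nd)\<^sup>2)"
  proof (intro add_mono)
    have J_le: "norm (J *v v) \<le> L2 * c" if "norm v \<le> c" for v c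
    proof -
      have "L2 * norm v \<le> L2 * c" using that L2_pos by simp
      then show ?thesis using B_jac_bound[OF x J, of v] by linarith
    qed
    have "L1 * (norm (z - x))\<^sup>2 \<le> L1 * (2 * nd)\<^sup>2"
      using zx L1_nonneg by (intro mult_left_mono power_mono) auto
    then show "norm (F z - F x - J *v (z - x)) \<le> L1 * (2 * nd)\<^sup>2"
      using semismooth[OF x z J] by linarith
    have \<mu>: "\<mu> \<le> L2 * ne" using norm_F_le_dist_solution x xb by (simp add: \<mu>_def ne_def)
    then have "\<mu>\<^sup>2 \<le> (L2 * ne)\<^sup>2" by (intro power_mono) (auto simp: \<mu>_def)
    then have "L3 * \<mu>\<^sup>2 \<le> L3 * (L2 * ne)\<^sup>2" using L3_nonneg by (rule mult_left_mono)
    then show "norm r \<le> L3 * L2\<^sup>2 * ne\<^sup>2" using r by (simp add: \<mu>_def power_mult_distrib mult.assoc)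
    show "norm (\<mu> *\<^sub>R d) \<le> L2 * ne * nd" using \<mu> by (simp add: \<mu>_def nd_def mult_right_mono)
    have "norm (P *v (w - z)) \<le> C * norm (x - z) * norm (w - z)"
      using tangent_proj_normal[OF x z, of w] nearest unfolding P_def w_def by blast
    also have "\<dots> \<le> C * (2 * nd) * nd"
      using zx wz C_nonneg by (intro mult_mono mult_left_mono) (auto simp: norm_minus_commute nd_def)
    finally show "norm (J *v (P *v (w - z))) \<le> L2 * (C * (2 * nd) * nd)" by (rule J_le)
    have "norm ((z - x) - P *v (z - x)) \<le> C * (norm (z - x))\<^sup>2"
      using tangent_residual[OF x z] unfolding P_def .
    also have "\<dots> \<le> C * (2 * nd)\<^sup>2" using zx C_nonneg by (intro mult_left_mono power_mono) auto
    finally show "norm (J *v ((z - x) - P *v (z - x))) \<le> L2 * (C * (2 * nd)\<^sup>2)" by (rule J_le)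
  qed
  also have "\<dots> = (4 * L1 + 6 * L2 * C) * nd\<^sup>2 + L2 * ne * nd + L3 * L2\<^sup>2 * ne\<^sup>2"
    by (simp add: power2_eq_square algebra_simps)
  finally show ?thesis by (simp add: ne_def nd_def)
qed

lemma residual_after_step:
  assumes x: "x \<in> M \<inter> cball xs \<rho>" and xb: "xb \<in> solutions \<inter> cball xs \<rho>" and z: "z \<in> M \<inter> cball xs \<rho>"
    and J: "J \<in> B_jac F x"
    and eq: "(J ** tangent_proj M x + norm (F x) *\<^sub>R mat 1) *v d = - F x + r"
    and r: "norm r \<le> L3 * (norm (F x))\<^sup>2"
    and nearest: "\<And>m. m \<in> M \<Longrightarrow> norm (x + d - z) \<le> norm (x + d - m)"
    and d: "norm d \<le> c_dir * norm (xb - x)"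
  shows "norm (F z) \<le> c_res * (norm (xb - x))\<^sup>2"
proof -
  define ne where "ne = norm (xb - x)"
  have "norm (F z) \<le> (4 * L1 + 6 * L2 * C) * (norm d)\<^sup>2 + L2 * ne * norm d + L3 * L2\<^sup>2 * ne\<^sup>2"
    using residual_after_step_le[OF x xb z J eq r nearest] by (simp add: ne_def)
  also have "\<dots> \<le> (4 * L1 + 6 * L2 * C) * (c_dir\<^sup>2 * ne\<^sup>2) + L2 * ne * (c_dir * ne) + L3 * L2\<^sup>2 * ne\<^sup>2"
    using d L1_nonneg L2_pos C_nonneg unfolding ne_def
    by (intro add_mono mult_left_mono order_refl)
       (auto simp flip: power_mult_distrib intro: power_mono)
  also have "\<dots> = c_res * ne\<^sup>2" by (simp add: c_res_def power2_eq_square algebra_simps)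
  finally show ?thesis by (simp add: ne_def)
qed

lemma nearby_solution:
  assumes x: "x \<in> M" "norm (x - xs) \<le> r_basin" and Fx: "F x \<noteq> 0"
  obtains xb where "xb \<in> solutions \<inter> cball xs \<rho>" "norm (xb - x) \<le> 2 * infdist x solutions"
    "\<gamma> * norm (xb - x) \<le> 2 * norm (F x)"
proof -
  define \<delta> where "\<delta> = infdist x solutions"
  have "\<delta> \<noteq> 0" using F_eq_0_if_infdist_0[of x] Fx unfolding \<delta>_def by blast
  then have "\<delta> < 2 * \<delta>" using infdist_nonneg[of x solutions] by (simp add: \<delta>_def)
  then obtain xb where xb: "xb \<in> solutions" "dist x xb < 2 * \<delta>"
    using infdist_lessE[of solutions x "2 * \<delta>"] xs_solution unfolding \<delta>_def by blast
  have ne: "norm (xb - x) \<le> 2 * \<delta>" using xb(2) by (simp add: dist_norm norm_minus_commute)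
  have "\<delta> \<le> norm (x - xs)" using infdist_le[OF xs_solution, of x] by (simp add: \<delta>_def dist_norm)
  then have "norm (xb - xs) \<le> \<rho>"
    using ne x(2) r_basin_le(2) norm_triangle_ineq[of "xb - x" "x - xs"] by simp
  then have sol: "xb \<in> solutions \<inter> cball xs \<rho>" using xb(1) by (simp add: dist_norm norm_minus_commute)
  have "x \<in> M \<inter> cball xs \<rho>"
    using x r_basin_le(1) by (simp add: dist_norm norm_minus_commute)
  then have "\<gamma> * \<delta> \<le> norm (F x)" using error_bound by (simp add: \<delta>_def)
  moreover have "\<gamma> * norm (xb - x) \<le> \<gamma> * (2 * \<delta>)" using ne \<gamma>_pos by simp
  ultimately have "\<gamma> * norm (xb - x) \<le> 2 * norm (F x)" by linarith
  with sol ne show thesis unfolding \<delta>_def by (rule that)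
qed

lemma newton_step_contraction:
  assumes x: "x \<in> M" "norm (x - xs) \<le> r_basin" and q: "1 \<le> q"
    and step: "projected_newton_step F M q L3 x J d r z"
  shows "z \<in> M \<and> infdist z solutions \<le> c_contr * (infdist x solutions)\<^sup>2 \<and>
    norm (z - x) \<le> c_step * infdist x solutions"
proof (cases "F x = 0")
  case True
  then show ?thesis using step x by (simp add: projected_newton_step_def)
next
  case False
  define \<delta> where "\<delta> = infdist x solutions"
  have J: "J \<in> B_jac F x" and eq: "(J ** tangent_proj M x + norm (F x) *\<^sub>R mat 1) *v d = - F x + r"
    and r: "norm r / norm (F x) \<le> L3 * norm (F x) powr q"
    and z: "z \<in> M" and nearest: "\<And>m. m \<in> M \<Longrightarrow> norm (x + d - z) \<le> norm (x + d - m)"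
    using step False nearest_point_le_infdist unfolding projected_newton_step_def by auto
  obtain xb where xb: "xb \<in> solutions \<inter> cball xs \<rho>" "norm (xb - x) \<le> 2 * \<delta>"
    and close: "\<gamma> * norm (xb - x) \<le> 2 * norm (F x)"
    using nearby_solution[OF x False] unfolding \<delta>_def by blast
  have x_ball: "x \<in> M \<inter> cball xs \<rho>" using x r_basin_le(1) by (simp add: dist_norm norm_minus_commute)
  have "norm (F x) \<le> L2 * norm (x - xs)"
    using norm_F_le_dist_solution[of x xs] x_ball xs_solution \<rho>_pos by (simp add: norm_minus_commute)
  also have "\<dots> \<le> L2 * r_basin" using x(2) L2_pos by simp
  finally have "norm (F x) \<le> 1" using constant_bounds(4) by linarith
  then have r': "norm r \<le> L3 * (norm (F x))\<^sup>2"
    using residual_le_square[OF r _ _ q L3_nonneg] False by simp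
  have d: "norm d \<le> c_dir * norm (xb - x)"
    by (rule newton_direction_bound[OF x_ball xb(1) J False eq r' close])
  have "norm (z - x) \<le> 2 * (c_dir * norm (xb - x))"
    using nearest_point_step(2)[OF x(1) nearest] d by linarith
  also have "\<dots> \<le> 2 * (c_dir * (2 * \<delta>))" using xb(2) constant_bounds(1) by simp
  finally have zx: "norm (z - x) \<le> 4 * c_dir * \<delta>" by simp
  have "\<delta> \<le> norm (x - xs)" using infdist_le[OF xs_solution, of x] by (simp add: \<delta>_def dist_norm)
  then have "4 * c_dir * \<delta> \<le> 4 * c_dir * r_basin" using x(2) constant_bounds(1) by simp
  then have "norm (z - xs) \<le> \<rho>"
    using zx x(2) r_basin_le(3) norm_triangle_ineq[of "z - x" "x - xs"] by simp
  then have z_ball: "z \<in> M \<inter> cball xs \<rho>" using z by (simp add: dist_norm norm_minus_commute)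
  have "\<gamma> * infdist z solutions \<le> norm (F z)" using error_bound[OF z_ball] .
  also have "\<dots> \<le> c_res * (norm (xb - x))\<^sup>2"
    by (rule residual_after_step[OF x_ball xb(1) z_ball J eq r' nearest d])
  also have "\<dots> \<le> c_res * (2 * \<delta>)\<^sup>2"
    using xb(2) constant_bounds(2) by (intro mult_left_mono power_mono) auto
  finally have "infdist z solutions \<le> (4 * c_res / \<gamma>) * \<delta>\<^sup>2"
    using \<gamma>_pos by (simp add: field_simps power_mult_distrib)
  then show ?thesis using z zx unfolding \<delta>_def c_contr_def c_step_def by blast
qed

lemma r_start_bounds: "0 < r_start" "(1 + 2 * c_step) * r_start \<le> r_basin" "c_contr * r_start \<le> 1/2"
proof -
  have c: "0 \<le> c_contr" "0 \<le> c_step"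
    using constant_bounds(1,2) \<gamma>_pos by (simp_all add: c_contr_def c_step_def)
  have le: "r_start \<le> r_basin / (1 + 2 * c_step)" "r_start \<le> 1 / (2 * c_contr + 1)"
    by (simp_all add: r_start_def)
  show "0 < r_start" using constant_bounds(3) c by (simp add: r_start_def)
  show "(1 + 2 * c_step) * r_start \<le> r_basin" using le(1) c by (simp add: le_divide_eq mult.commute)
  have "c_contr * r_start \<le> c_contr * (1 / (2 * c_contr + 1))" using le(2) c(1) by (rule mult_left_mono)
  also have "\<dots> \<le> 1/2" using c(1) by (simp add: divide_le_eq)
  finally show "c_contr * r_start \<le> 1/2" .
qed

lemma newton_iterates_converge:
  assumes q: "1 \<le> q" and x0: "x 0 \<in> M" "infdist (x 0) solutions < r_start"
    "dist (x 0) xs = infdist (x 0) solutions"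
    and steps: "\<And>k. projected_newton_step F M q L3 (x k) (J k) (d k) (r k) (x (Suc k))"
  obtains xh where "xh \<in> solutions" "x \<longlonglongrightarrow> xh" "(\<lambda>k. infdist (x k) solutions) \<longlonglongrightarrow> 0"
    "\<And>k. norm (x (Suc k) - xh) \<le> (2 * c_step * c_contr * infdist (x k) solutions) * norm (x k - xh)"
proof -
  have c_contr: "0 \<le> c_contr" and c_step: "0 \<le> c_step"
    using constant_bounds(1,2) \<gamma>_pos by (simp_all add: c_contr_def c_step_def)
  let ?e = "\<lambda>y. infdist y solutions"
  have step: "x (Suc k) \<in> M \<and> ?e (x (Suc k)) \<le> c_contr * (?e (x k))\<^sup>2 \<and> norm (x (Suc k) - x k) \<le> c_step * ?e (x k)"
    if "x k \<in> M" "norm (x k - xs) \<le> r_basin" for k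
    using newton_step_contraction[OF that q steps] .
  have confined: "x k \<in> M \<and> norm (x k - xs) \<le> r_basin \<and> ?e (x (Suc k)) \<le> ?e (x k) / 2" for k
    by (rule quadratic_contraction_confined[where e = ?e and x = x and A = M and c = xs,
          OF step infdist_nonneg c_step c_contr _ _ _ r_start_bounds(2,3)])
       (use x0 in \<open>auto simp: dist_norm\<close>)
  obtain xh where lim: "x \<longlonglongrightarrow> xh" and e_lim: "(\<lambda>k. ?e (x k)) \<longlonglongrightarrow> 0"
    and near: "\<And>k. norm (x k - xh) \<le> 2 * c_step * ?e (x k)"
    using convergent_of_halving_steps[of x c_step "\<lambda>k. ?e (x k)"] step confined infdist_nonneg c_step
    by blast
  have "x k \<in> M \<inter> cball xs \<rho>" for k
    using confined[of k] r_basin_le(1) by (simp add: dist_norm norm_minus_commute)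
  then have "xh \<in> M \<inter> cball xs \<rho>"
    using closed_M by (intro Lim_in_closed_set[OF _ _ _ lim]) (auto intro: always_eventually)
  moreover have "?e xh = 0" using LIMSEQ_unique[OF tendsto_infdist[OF lim] e_lim] .
  ultimately have xh: "xh \<in> solutions" using F_eq_0_if_infdist_0 by blast
  have "norm (x (Suc k) - xh) \<le> (2 * c_step * c_contr * ?e (x k)) * norm (x k - xh)" for k
  proof -
    have "2 * c_step * ?e (x (Suc k)) \<le> 2 * c_step * (c_contr * (?e (x k))\<^sup>2)"
      using step[of k] confined[of k] c_step by (intro mult_left_mono) auto
    then have "norm (x (Suc k) - xh) \<le> 2 * c_step * (c_contr * (?e (x k))\<^sup>2)"
      using near[of "Suc k"] by linarith
    also have "\<dots> = (2 * c_step * c_contr * ?e (x k)) * ?e (x k)" by (simp add: power2_eq_square)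
    also have "\<dots> \<le> (2 * c_step * c_contr * ?e (x k)) * norm (x k - xh)"
      using infdist_le[OF xh, of "x k"] infdist_nonneg[of "x k" solutions] c_step c_contr
      by (intro mult_left_mono) (auto simp: dist_norm)
    finally show ?thesis .
  qed
  with xh lim e_lim show thesis by (rule that)
qed

lemma superlinear_convergence:
  assumes q: "1 \<le> q"
  shows "\<exists>\<delta>>0. \<forall>x J d r. x 0 \<in> M \<and> infdist (x 0) solutions < \<delta> \<and> dist (x 0) xs = infdist (x 0) solutions \<and>
     (\<forall>k. projected_newton_step F M q L3 (x k) (J k) (d k) (r k) (x (Suc k))) \<longrightarrow>
     (\<exists>xh \<in> solutions. x \<longlonglongrightarrow> xh \<and> (\<lambda>k. norm (x (Suc k) - xh)) \<in> o(\<lambda>k. norm (x k - xh)))"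
proof (intro exI[of _ r_start] conjI allI impI r_start_bounds(1))
  fix x J d r
  assume "x 0 \<in> M \<and> infdist (x 0) solutions < r_start \<and> dist (x 0) xs = infdist (x 0) solutions \<and>
    (\<forall>k. projected_newton_step F M q L3 (x k) (J k) (d k) (r k) (x (Suc k)))"
  then obtain xh where xh: "xh \<in> solutions" "x \<longlonglongrightarrow> xh"
    and e_lim: "(\<lambda>k. infdist (x k) solutions) \<longlonglongrightarrow> 0"
    and rate: "\<And>k. norm (x (Suc k) - xh) \<le> (2 * c_step * c_contr * infdist (x k) solutions) * norm (x k - xh)"
    using newton_iterates_converge[OF q, of x J d r] by blast
  have "(\<lambda>k. norm (x (Suc k) - xh)) \<in> o(\<lambda>k. norm (x k - xh))"
    using rate tendsto_mult_right_zero[OF e_lim] by (intro smallo_of_le_vanishing_factor) auto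
  with xh show "\<exists>xh \<in> solutions. x \<longlonglongrightarrow> xh \<and> (\<lambda>k. norm (x (Suc k) - xh)) \<in> o(\<lambda>k. norm (x k - xh))"
    by blast
qed

end

lemma A1_A2_A3_imp_projected_newton_local:
  fixes F :: "real^'n \<Rightarrow> real^'n"
  assumes F_loc: "locally_lipschitz F" and M_sm: "smooth_embedded_submanifold M"
    and xs_sol: "xs \<in> {z. F z = 0} \<inter> M" and L3: "0 \<le> L3"
    and A1: "A1 F M xs" and A2: "A2 F M xs" and A3: "A3 F M xs"
  obtains \<rho> L1 L2 C \<gamma> where "projected_newton_local F M xs \<rho> L1 L2 L3 C \<gamma>"
proof -
  obtain b1 L2 L1 where b1: "b1 > 0" and L2: "L2 > 0" and lip: "L2-lipschitz_on (cball xs b1) F"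
    and L1: "L1 > 0" and semismooth: "\<forall>x\<in>M \<inter> cball xs b1. \<forall>y\<in>M \<inter> cball xs b1. \<forall>J\<in>B_jac F x.
        norm (F y - F x - J *v (y - x)) \<le> L1 * (norm (y - x))\<^sup>2"
    using A1 unfolding A1_def by blast
  obtain b2 where b2: "b2 > 0" and regular: "\<forall>x\<in>M \<inter> cball xs b2. \<forall>J\<in>B_jac F x. F x \<noteq> 0 \<longrightarrow>
     invertible (J ** tangent_proj M x + norm (F x) *\<^sub>R mat 1) \<and>
     mnorm (matrix_inv (J ** tangent_proj M x + norm (F x) *\<^sub>R mat 1)) \<le> 1 / norm (F x)"
    using A2 unfolding A2_def by blast
  obtain b3 \<gamma> where b3: "b3 > 0" and \<gamma>: "\<gamma> > 0"
    and error_bound: "\<forall>x\<in>M \<inter> cball xs b3. norm (F x) \<ge> \<gamma> * infdist x ({z. F z = 0} \<inter> M)"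
    using A3 unfolding A3_def by blast
  obtain b4 C where b4: "b4 > 0" and C: "C \<ge> 0" and closed: "closed (M \<inter> cball xs b4)"
    and tangent_residual: "\<And>x y. x \<in> M \<inter> cball xs b4 \<Longrightarrow> y \<in> M \<inter> cball xs b4 \<Longrightarrow>
       norm ((y - x) - tangent_proj M x *v (y - x)) \<le> C * (norm (y - x))\<^sup>2"
    and tangent_proj_normal: "\<And>x z w. x \<in> M \<inter> cball xs b4 \<Longrightarrow> z \<in> M \<inter> cball xs b4 \<Longrightarrow>
       (\<And>m. m \<in> M \<Longrightarrow> norm (w - z) \<le> norm (w - m)) \<Longrightarrow>
       norm (tangent_proj M x *v (w - z)) \<le> C * norm (x - z) * norm (w - z)"
    using smooth_embedded_submanifold_curvature_estimates[OF M_sm] xs_sol by blast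
  define \<rho> where "\<rho> = min (min (b1 / 2) b2) (min b3 b4)"
  have \<rho>: "\<rho> > 0" using b1 b2 b3 b4 by (simp add: \<rho>_def)
  have sub: "cball xs \<rho> \<subseteq> ball xs b1" "cball xs \<rho> \<subseteq> cball xs b1" "cball xs \<rho> \<subseteq> cball xs b2"
    "cball xs \<rho> \<subseteq> cball xs b3" "cball xs \<rho> \<subseteq> cball xs b4"
    using b1 by (auto simp: \<rho>_def subset_eq)
  have "projected_newton_local F M xs \<rho> L1 L2 L3 C \<gamma>"
  proof
    show "continuous_on UNIV F" using locally_lipschitz_imp_continuous[OF F_loc] .
    have "M \<inter> cball xs \<rho> = M \<inter> cball xs b4 \<inter> cball xs \<rho>" using sub(5) by blast
    then show "closed (M \<inter> cball xs \<rho>)" using closed by (simp add: closed_Int)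
    show "L2-lipschitz_on (cball xs \<rho>) F" using lipschitz_on_subset[OF lip sub(2)] .
    show "norm (J *v v) \<le> L2 * norm v" if "x \<in> M \<inter> cball xs \<rho>" "J \<in> B_jac F x" for x J v
    proof (rule B_jac_norm_le[OF that(2) open_ball])
      show "x \<in> ball xs b1" using that(1) sub(1) by blast
      show "norm (F a - F b) \<le> L2 * norm (a - b)" if "a \<in> ball xs b1" "b \<in> ball xs b1" for a b
        using lipschitz_onD[OF lip, of a b] that by (simp add: dist_norm)
    qed
    show "norm (F x) * norm u \<le> norm ((J ** tangent_proj M x + norm (F x) *\<^sub>R mat 1) *v u)"
      if "x \<in> M \<inter> cball xs \<rho>" "J \<in> B_jac F x" "F x \<noteq> 0" for x J u
      using regular that(2,3) that(1) sub(3) mnorm_matrix_inv_le_imp_norm_ge[of _ "norm (F x)" u]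
      by auto
    show "norm (F y - F x - J *v (y - x)) \<le> L1 * (norm (y - x))\<^sup>2"
      if "x \<in> M \<inter> cball xs \<rho>" "y \<in> M \<inter> cball xs \<rho>" "J \<in> B_jac F x" for x y J
      using semismooth that sub(2) by blast
    show "\<gamma> * infdist x ({z. F z = 0} \<inter> M) \<le> norm (F x)" if "x \<in> M \<inter> cball xs \<rho>" for x
      using error_bound that sub(4) by blast
    show "norm ((y - x) - tangent_proj M x *v (y - x)) \<le> C * (norm (y - x))\<^sup>2"
      if "x \<in> M \<inter> cball xs \<rho>" "y \<in> M \<inter> cball xs \<rho>" for x y
      using tangent_residual[of x y] that sub(5) by blast
    show "norm (tangent_proj M x *v (w - z)) \<le> C * norm (x - z) * norm (w - z)"
      if "x \<in> M \<inter> cball xs \<rho>" "z \<in> M \<inter> cball xs \<rho>" "\<And>m. m \<in> M \<Longrightarrow> norm (w - z) \<le> norm (w - m)"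
      for x z w
      using tangent_proj_normal[of x z w] that sub(5) by blast
  qed (use xs_sol \<rho> L1 L2 L3 C \<gamma> in auto)
  then show thesis by (rule that)
qed

theorem theorem5p4:
  fixes F :: "real^'n \<Rightarrow> real^'n" and M :: "(real^'n) set"
    and q L3 :: real and xs :: "real^'n"
  assumes F_loc: "locally_lipschitz F"
    and M_sm: "smooth_embedded_submanifold M"
    and q: "1 < q" "q \<le> 2" and L3: "L3 > 0"
    and xs_sol: "xs \<in> {z. F z = 0} \<inter> M"
    and A1: "A1 F M xs" and A2: "A2 F M xs" and A3: "A3 F M xs"
  shows "\<exists>\<delta>>0. \<forall>(x::nat \<Rightarrow> real^'n) J d r.
     x 0 \<in> M \<and> infdist (x 0) ({z. F z = 0} \<inter> M) < \<delta> \<and>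
     dist (x 0) xs = infdist (x 0) ({z. F z = 0} \<inter> M) \<and>
     (\<forall>k. F (x k) = 0 \<longrightarrow> x (Suc k) = x k) \<and>
     (\<forall>k. F (x k) \<noteq> 0 \<longrightarrow>
        J k \<in> B_jac F (x k) \<and>
        (J k ** tangent_proj M (x k) + norm (F (x k)) *\<^sub>R mat 1) *v d k = - F (x k) + r k \<and>
        norm (r k) / norm (F (x k)) \<le> L3 * norm (F (x k)) powr q \<and>
        x (Suc k) \<in> M \<and> dist (x k + d k) (x (Suc k)) = infdist (x k + d k) M)
     \<longrightarrow> (\<exists>xh \<in> {z. F z = 0} \<inter> M. x \<longlonglongrightarrow> xh \<and>
            (\<lambda>k. norm (x (Suc k) - xh)) \<in> o(\<lambda>k. norm (x k - xh)))"
proof -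
  obtain \<rho> L1 L2 C \<gamma> where "projected_newton_local F M xs \<rho> L1 L2 L3 C \<gamma>"
    using A1_A2_A3_imp_projected_newton_local[OF F_loc M_sm xs_sol less_imp_le[OF L3] A1 A2 A3] .
  then interpret projected_newton_local F M xs \<rho> L1 L2 L3 C \<gamma> .
  have "1 \<le> q" using q by simp
  from superlinear_convergence[OF this] show ?thesis
    unfolding projected_newton_step_def all_conj_distrib .
qed

end
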